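(* Let $T\subset\mathbb{R}^d$ ($d\in\{2,3\}$) be a nondegenerate simplex, $k\ge1$. For any $\sigma\in H^1(T,\mathbb{R}^{d\times d})$, $$\mathcal{M}^{-1}(I_T\sigma)=I_{\hat T}(\mathcal{M}^{-1}(\sigma)).$$
   Context: $\mathbb{D}$ = trace-free $d\times d$ matrices. For a facet with unit normal $n$, $\tau_{nt}=\tau n-(n^T\tau n)n$ (identified with an $\mathbb{R}^{d-1}$-valued function). For a simplex $K$, $\Sigma_k(K)=\{\tau\in\mathbb{P}^k(K,\mathbb{D}):\tau_{nt}|_F\in\mathbb{P}^{k-1}(F,\mathbb{R}^{d-1})\ \forall\text{ facets }F\subset\partial K\}$ and $\mathcal{B}_k(K)=\{\tau\in\Sigma_k(K):\tau_{nt}=0\text{ on }\partial K\}$. $\hat T$ is the unit reference simplex, $\phi_T:\hat T\to T$ an affine bijection with Jacobian $F_T$ (for $\hat T$ itself the map is the identity). The mapping $\mathcal{M}$ sends $\hat\sigma$ on $\hat T$ to $\mathcal{M}(\hat\sigma)=\frac{1}{\det F_T}F_T^{-T}(\hat\sigma\circ\phi_T^{-1})F_T^T$ on $T$, so $\mathcal{M}^{-1}(\sigma)=\det(F_T)\,F_T^T(\sigma\circ\phi_T)F_T^{-T}$. Degrees of freedom on a simplex $K$ with affine map $\phi_K$, Jacobian $F_K$: for each facet $F$ of $K$, $\tau\mapsto\int_F\tau_{nt}\cdot r\,ds$ for $r\in\mathbb{P}^{k-1}(F,\mathbb{R}^{d-1})$; and $\tau\mapsto\int_K\tau:F_K(\hat\eta\circ\phi_K^{-1})F_K^{-1}\,dx$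 for $\hat\eta\in\mathcal{B}_k(\hat T)$; denote this set $\Phi(K)$. These are unisolvent on $\Sigma_k(K)$. The local interpolant $I_K\sigma\in\Sigma_k(K)$ of $\sigma\in H^1(K,\mathbb{R}^{d\times d})$ is defined by $\phi(\sigma-I_K\sigma)=0$ for all $\phi\in\Phi(K)$. *)

theory Defs
  imports "HOL-Analysis.Analysis"
begin

type_synonym 'n mat = "real^'n^'n"

definition poly_deg :: "nat \<Rightarrow> (real^'n \<Rightarrow> real) \<Rightarrow> bool" where
  "poly_deg k p \<longleftrightarrow> (\<exists>c :: ('n \<Rightarrow> nat) \<Rightarrow> real.
      p = (\<lambda>x. \<Sum>\<alpha>\<in>{\<alpha>::'n \<Rightarrow> nat. sum \<alpha> UNIV \<le> k}. c \<alpha> * (\<Prod>i\<in>UNIV. (x$i) ^ \<alpha> i)))"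

definition poly_vec :: "nat \<Rightarrow> (real^'n \<Rightarrow> real^'n) \<Rightarrow> bool" where
  "poly_vec k q \<longleftrightarrow> (\<forall>i. poly_deg k (\<lambda>x. q x $ i))"

definition poly_mat :: "nat \<Rightarrow> (real^'n \<Rightarrow> 'n mat) \<Rightarrow> bool" where
  "poly_mat k \<tau> \<longleftrightarrow> (\<forall>i j. poly_deg k (\<lambda>x. \<tau> x $ i $ j))"

definition ref_simplex :: "(real^'n) set" where
  "ref_simplex = {x. (\<forall>i. 0 \<le> x$i) \<and> (\<Sum>i\<in>UNIV. x$i) \<le> 1}"

definition facet_normal :: "(real^'n) set \<Rightarrow> real^'n" where
  "facet_normal F = (SOME n. norm n = 1 \<and> (\<forall>x\<in>F. \<forall>y\<in>F. n \<bullet> (x - y) = 0))"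

text \<open>Normal-tangential component tau n - (n^T tau n) n (kept as a vector in R^d
  orthogonal to n, i.e. in the tangent space of the facet).\<close>
definition nt :: "(real^'n) set \<Rightarrow> 'n mat \<Rightarrow> real^'n" where
  "nt F A = (let n = facet_normal F in A *v n - scaleR (n \<bullet> (A *v n)) n)"

text \<open>Surface integral over a flat facet F, realised exactly as a volume integral over the
  unit-height prism F + [0,1] n of the function composed with the orthogonal projection onto
  the affine hull of F (Fubini: the volume element of the prism is ds dt).\<close>
definition facet_prism :: "(real^'n) set \<Rightarrow> (real^'n) set" where
  "facet_prism F = {y + scaleR t (facet_normal F) | y t. y \<in> F \<and> t \<in> {0..1}}"

definition facet_proj :: "(real^'n) set \<Rightarrow> real^'n \<Rightarrow> real^'n" where
  "facet_proj F x = (let n = facet_normal F; c = (SOME c. c \<in> F) in x - scaleR ((x - c) \<bullet> n) n)"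

definition facet_integral :: "(real^'n) set \<Rightarrow> (real^'n \<Rightarrow> real) \<Rightarrow> real" where
  "facet_integral F g = integral (facet_prism F) (\<lambda>x. g (facet_proj F x))"

definition Sigma :: "nat \<Rightarrow> (real^'n) set \<Rightarrow> (real^'n \<Rightarrow> 'n mat) set" where
  "Sigma k K = {\<tau>. poly_mat k \<tau> \<and> (\<forall>x. trace (\<tau> x) = 0) \<and>
     (\<forall>F. F facet_of K \<longrightarrow> (\<exists>q. poly_vec (k - 1) q \<and> (\<forall>x\<in>F. nt F (\<tau> x) = q x)))}"

definition Bubble :: "nat \<Rightarrow> (real^'n) set \<Rightarrow> (real^'n \<Rightarrow> 'n mat) set" where
  "Bubble k K = {\<tau>\<in>Sigma k K. \<forall>F. F facet_of K \<longrightarrow> (\<forall>x\<in>F. nt F (\<tau> x) = 0)}"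

definition frob :: "('n::finite) mat \<Rightarrow> 'n mat \<Rightarrow> real" where
  "frob A B = (\<Sum>i\<in>UNIV. \<Sum>j\<in>UNIV. A$i$j * B$i$j)"

text \<open>All degrees of freedom Phi(K) vanish on rho; K has affine map x \<mapsto> FK x + b.\<close>
definition dofs_vanish :: "nat \<Rightarrow> (real^'n) set \<Rightarrow> 'n mat \<Rightarrow> real^'n \<Rightarrow> (real^'n \<Rightarrow> 'n mat) \<Rightarrow> bool" where
  "dofs_vanish k K FK b \<rho> \<longleftrightarrow>
     (\<forall>F r. F facet_of K \<longrightarrow> poly_vec (k - 1) r \<longrightarrow>
        facet_integral F (\<lambda>x. nt F (\<rho> x) \<bullet> r x) = 0) \<and>
     (\<forall>\<eta>\<in>Bubble k (ref_simplex :: (real^'n) set).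
        integral K (\<lambda>x. frob (\<rho> x) (FK ** \<eta> (matrix_inv FK *v (x - b)) ** matrix_inv FK)) = 0)"

text \<open>Functions for which all degrees of freedom are defined (replaces H^1).\<close>
definition admissible :: "(real^'n) set \<Rightarrow> (real^'n \<Rightarrow> 'n mat) \<Rightarrow> bool" where
  "admissible K \<sigma> \<longleftrightarrow> (\<forall>i j. (\<lambda>x. \<sigma> x $ i $ j) absolutely_integrable_on K) \<and>
     (\<forall>F. F facet_of K \<longrightarrow> (\<forall>i j. (\<lambda>x. \<sigma> (facet_proj F x) $ i $ j) absolutely_integrable_on facet_prism F))"

definition interp :: "nat \<Rightarrow> (real^'n) set \<Rightarrow> 'n mat \<Rightarrow> real^'n \<Rightarrow> (real^'n \<Rightarrow> 'n mat) \<Rightarrow> (real^'n \<Rightarrow> 'n mat)" where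
  "interp k K FK b \<sigma> = (THE \<tau>. \<tau> \<in> Sigma k K \<and> dofs_vanish k K FK b (\<lambda>x. \<sigma> x - \<tau> x))"

definition aff_map :: "'n mat \<Rightarrow> real^'n \<Rightarrow> real^'n \<Rightarrow> real^'n" where
  "aff_map F b x = F *v x + b"

definition Minv :: "'n mat \<Rightarrow> real^'n \<Rightarrow> (real^'n \<Rightarrow> 'n mat) \<Rightarrow> (real^'n \<Rightarrow> 'n mat)" where
  "Minv F b \<sigma> = (\<lambda>x. scaleR (det F) (transpose F ** \<sigma> (aff_map F b x) ** matrix_inv (transpose F)))"

end

(*
  Write P for the transformation M^{-1} along phi x = G x + b, with an arbitrary nonzero scale c
  in place of det G; P is a bijection of matrix fields. Since G^T maps the
  unit normal of phi(F) to a multiple of the unit normal of F, conjugation by G^T carries the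
  normal-tangential components on phi(F) linearly onto those on F, so P maps Sigma_k(phi(K))
  onto Sigma_k(K). Substituting x = phi(y) (for a facet integral, in the prism over the facet)
  turns every degree of freedom of rho on phi(K) into a nonzero multiple of one of P rho on K,
  with transformed test polynomials, and the inverse map converts back. Hence tau satisfies the
  conditions defining I_phi(K) sigma iff P tau satisfies those defining I_K (P sigma), and
  uniqueness on the reference element gives the claim.

  The dimension hypothesis only serves the change-of-variables theorem of HOL-Analysis, which is
  stated for well-ordered index types.
*)

theory Submission
  imports Defs
begin

section \<open>Affine change of variables\<close>

definition reindex_vec :: "('m \<Rightarrow> 'n) \<Rightarrow> real^'n \<Rightarrow> real^'m" where
  "reindex_vec p x = (\<chi> j. x $ p j)"

lemma reindex_vec_nth [simp]: "reindex_vec p x $ j = x $ p j"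
  by (simp add: reindex_vec_def)

lemma reindex_vec_inv_left: "bij p \<Longrightarrow> reindex_vec (inv p) (reindex_vec p x) = x"
  by (simp add: vec_eq_iff bij_def surj_f_inv_f)

lemma reindex_vec_inv_right: "bij p \<Longrightarrow> reindex_vec p (reindex_vec (inv p) y) = y"
  by (simp add: vec_eq_iff bij_def inv_f_f)

lemma linear_reindex_vec: "linear (reindex_vec p)"
  by (auto simp: linear_iff vec_eq_iff)

lemma norm_reindex_vec: "bij p \<Longrightarrow> norm (reindex_vec p x) = norm x"
  using sum.reindex_bij_betw[of p UNIV UNIV "\<lambda>i. (norm (x $ i))\<^sup>2"]
  by (simp add: norm_vec_def L2_set_def)

lemma reindex_vec_cbox: "bij p \<Longrightarrow> reindex_vec p ` cbox a b = cbox (reindex_vec p a) (reindex_vec p b)"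
proof (intro subset_antisym subsetI)
  assume p: "bij p"
  fix y assume y: "y \<in> cbox (reindex_vec p a) (reindex_vec p b)"
  have "reindex_vec (inv p) y \<in> cbox a b"
    using y p by (auto simp: mem_box_cart bij_def) (metis surj_f_inv_f)+
  then show "y \<in> reindex_vec p ` cbox a b"
    using reindex_vec_inv_right[OF p] by (metis image_eqI)
qed (auto simp: mem_box_cart)

lemma content_reindex_vec_cbox:
  assumes "bij p"
  shows "Henstock_Kurzweil_Integration.content (cbox (reindex_vec p a) (reindex_vec p b))
    = Henstock_Kurzweil_Integration.content (cbox a b)"
proof -
  have "cbox (reindex_vec p a) (reindex_vec p b) = {} \<longleftrightarrow> cbox a b = {}"
    by (metis image_is_empty reindex_vec_cbox[OF assms])
  moreover have "(\<Prod>j\<in>UNIV. b $ p j - a $ p j) = (\<Prod>i\<in>UNIV. b $ i - a $ i)"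
    using prod.reindex_bij_betw[of p UNIV UNIV "\<lambda>i. b $ i - a $ i"] assms by simp
  ultimately show ?thesis by (simp add: content_cbox_if_cart)
qed

lemma has_integral_reindex_vec_cbox:
  fixes f :: "real^'n \<Rightarrow> 'b::banach" and p :: "'m::finite \<Rightarrow> 'n::finite"
  assumes p: "bij p" and f: "(f has_integral i) (cbox a b)"
  shows "((\<lambda>y. f (reindex_vec (inv p) y)) has_integral i) (cbox (reindex_vec p a) (reindex_vec p b))"
proof -
  have pi: "bij (inv p)" using p by (simp add: bij_imp_bij_inv)
  have "((\<lambda>y. f (reindex_vec (inv p) y)) has_integral (1/1) *\<^sub>R i) (reindex_vec p ` cbox a b)"
  proof (rule has_integral_twiddle[where h="reindex_vec p"])
    show "reindex_vec p (reindex_vec (inv p) x) = x" for x using reindex_vec_inv_right[OF p] .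
    show "reindex_vec (inv p) (reindex_vec p x) = x" for x using reindex_vec_inv_left[OF p] .
    show "continuous (at x) (reindex_vec (inv p))" for x
      by (intro linear_continuous_at linear_reindex_vec[THEN linear_conv_bounded_linear[THEN iffD1]])
    show "\<exists>w z. reindex_vec (inv p) ` cbox u v = cbox w z" for u v
      using reindex_vec_cbox[OF pi] by blast
    show "\<exists>w z. reindex_vec p ` cbox u v = cbox w z" for u v
      using reindex_vec_cbox[OF p] by blast
    show "Henstock_Kurzweil_Integration.content (reindex_vec (inv p) ` cbox u v)
        = 1 * Henstock_Kurzweil_Integration.content (cbox u v)" for u v
      using reindex_vec_cbox[OF pi] content_reindex_vec_cbox[OF pi] by simp
  qed (simp_all add: f)
  then show ?thesis using reindex_vec_cbox[OF p] by simp
qed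

lemma has_integral_reindex_vec_UNIV:
  fixes g :: "real^'n \<Rightarrow> 'b::banach" and p :: "'m::finite \<Rightarrow> 'n::finite"
  assumes p: "bij p" and g: "(g has_integral i) UNIV"
  shows "((\<lambda>y. g (reindex_vec (inv p) y)) has_integral i) UNIV"
proof -
  have pi: "bij (inv p)" using p by (simp add: bij_imp_bij_inv)
  have unbounded: "\<not> (\<exists>a b. (UNIV :: (real^'k::finite) set) = cbox a b)"
    using bounded_cbox not_bounded_UNIV by metis
  show ?thesis
  proof (subst has_integral_alt, simp only: if_not_P[OF unbounded], intro allI impI)
    fix e :: real assume "e > 0"
    from has_integral_altD[OF g unbounded this] obtain B where B: "B > 0"
      "\<And>a b. ball 0 B \<subseteq> cbox a b \<Longrightarrow> \<exists>z. (g has_integral z) (cbox a b) \<and> norm (z - i) < e"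
      by auto
    have "\<exists>z. ((\<lambda>y. g (reindex_vec (inv p) y)) has_integral z) (cbox a b) \<and> norm (z - i) < e"
      if ab: "ball 0 B \<subseteq> cbox a b" for a b :: "real^'m"
    proof -
      have "ball 0 B \<subseteq> cbox (reindex_vec (inv p) a) (reindex_vec (inv p) b)"
      proof
        fix x :: "real^'n" assume "x \<in> ball 0 B"
        then have "reindex_vec p x \<in> cbox a b" using ab norm_reindex_vec[OF p, of x] by auto
        then show "x \<in> cbox (reindex_vec (inv p) a) (reindex_vec (inv p) b)"
          using reindex_vec_cbox[OF pi] reindex_vec_inv_left[OF p] by (metis image_eqI)
      qed
      from B(2)[OF this] obtain z where z:
        "(g has_integral z) (cbox (reindex_vec (inv p) a) (reindex_vec (inv p) b))" "norm (z - i) < e"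
        by auto
      have "((\<lambda>y. g (reindex_vec (inv p) y)) has_integral z) (cbox a b)"
        using has_integral_reindex_vec_cbox[OF p z(1)] by (simp add: reindex_vec_inv_right[OF p])
      with z(2) show ?thesis by blast
    qed
    with B(1) show "\<exists>B>0. \<forall>a b. ball 0 B \<subseteq> cbox a b \<longrightarrow>
        (\<exists>z. ((\<lambda>x. if x \<in> UNIV then g (reindex_vec (inv p) x) else 0) has_integral z) (cbox a b)
          \<and> norm (z - i) < e)"
      by (intro exI[of _ B]) simp
  qed
qed

lemma has_integral_reindex_vec:
  fixes f :: "real^'n \<Rightarrow> 'b::banach" and p :: "'m::finite \<Rightarrow> 'n::finite"
  assumes p: "bij p" and f: "(f has_integral i) S"
  shows "((\<lambda>y. f (reindex_vec (inv p) y)) has_integral i) (reindex_vec p ` S)"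
proof -
  define g where "g = (\<lambda>x. if x \<in> S then f x else 0)"
  have "(g has_integral i) UNIV" using f has_integral_restrict_UNIV[of S f i] by (simp add: g_def)
  from has_integral_reindex_vec_UNIV[OF p this]
  have "((\<lambda>y. g (reindex_vec (inv p) y)) has_integral i) UNIV" .
  moreover have "y \<in> reindex_vec p ` S \<longleftrightarrow> reindex_vec (inv p) y \<in> S" for y
    using reindex_vec_inv_left[OF p] reindex_vec_inv_right[OF p] by (metis image_iff)
  ultimately show ?thesis
    using has_integral_restrict_UNIV[of "reindex_vec p ` S" "\<lambda>y. f (reindex_vec (inv p) y)" i]
    by (simp add: g_def cong: if_cong)
qed

lemma integral_reindex_vec:
  fixes f :: "real^'n \<Rightarrow> real" and p :: "'m::finite \<Rightarrow> 'n::finite"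
  assumes "bij p" and "f integrable_on S"
  shows "integral (reindex_vec p ` S) (\<lambda>y. f (reindex_vec (inv p) y)) = integral S f"
  using has_integral_reindex_vec[OF assms(1) integrable_integral[OF assms(2)]] by (rule integral_unique)

lemma absolutely_integrable_reindex_vec:
  fixes f :: "real^'n \<Rightarrow> real" and p :: "'m::finite \<Rightarrow> 'n::finite"
  assumes p: "bij p" and f: "f absolutely_integrable_on S"
  shows "(\<lambda>y. f (reindex_vec (inv p) y)) absolutely_integrable_on (reindex_vec p ` S)"
  using f has_integral_reindex_vec[OF p]
  by (auto simp: absolutely_integrable_on_def integrable_on_def)

lemma absolutely_integrable_reindex_vec_iff:
  fixes f :: "real^'n \<Rightarrow> real" and p :: "'m::finite \<Rightarrow> 'n::finite"
  assumes p: "bij p"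
  shows "(\<lambda>y. f (reindex_vec (inv p) y)) absolutely_integrable_on (reindex_vec p ` S)
    \<longleftrightarrow> f absolutely_integrable_on S"
proof
  have pi: "bij (inv p)" and "inv (inv p) = p" using p by (simp_all add: bij_imp_bij_inv inv_inv_eq)
  moreover have "reindex_vec (inv p) ` reindex_vec p ` S = S"
    by (simp add: image_image reindex_vec_inv_left[OF p])
  moreover assume "(\<lambda>y. f (reindex_vec (inv p) y)) absolutely_integrable_on (reindex_vec p ` S)"
  ultimately show "f absolutely_integrable_on S"
    using absolutely_integrable_reindex_vec[OF pi] by (fastforce simp: reindex_vec_inv_left[OF p])
qed (rule absolutely_integrable_reindex_vec[OF p])

lemma affine_change_of_variables_wellorder:
  fixes l :: "real^'m::{finite,wellorder} \<Rightarrow> real^'m::_" and f :: "real^'m::_ \<Rightarrow> real"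
  assumes l: "linear l" "inj l"
  shows "f absolutely_integrable_on (\<lambda>x. l x + b) ` S \<longleftrightarrow> (\<lambda>x. f (l x + b)) absolutely_integrable_on S"
    and "f absolutely_integrable_on (\<lambda>x. l x + b) ` S \<Longrightarrow>
      integral ((\<lambda>x. l x + b) ` S) f = \<bar>det (matrix l)\<bar> * integral S (\<lambda>x. f (l x + b))"
proof -
  obtain l' where l': "linear l'" "l' \<circ> l = id" using linear_injective_left_inverse[OF l] by blast
  have l'l: "l' (l x) = x" and ll': "l (l' y) = y" for x y
    using l'(2) linear_inverse_left[OF l(1) l'(1)] by (metis comp_apply id_apply)+
  have det: "det (matrix l) \<noteq> 0" using det_nz_iff_inj[OF l(1)] l(2) by simp
  have cov: "(\<lambda>x. \<bar>det (matrix l)\<bar> * f (l x + b)) absolutely_integrable_on S \<and>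
      integral S (\<lambda>x. \<bar>det (matrix l)\<bar> * f (l x + b)) = I
    \<longleftrightarrow> f absolutely_integrable_on (\<lambda>x. l x + b) ` S \<and> integral ((\<lambda>x. l x + b) ` S) f = I" for I
  proof (rule cov_invertible_real[where g="\<lambda>x. l x + b" and g'="\<lambda>_. l"
        and h="\<lambda>y. l' (y - b)" and h'="\<lambda>_. l'"])
    show "((\<lambda>x. l x + b) has_derivative l) (at x within S)" for x
      by (intro has_derivative_add_const linear_imp_has_derivative l(1))
    show "((\<lambda>y. l' (y - b)) has_derivative l') (at y within (\<lambda>x. l x + b) ` S)" for y
      using has_derivative_diff[OF linear_imp_has_derivative[OF l'(1)] has_derivative_const[of "l' b"]]
      by (simp add: linear_diff[OF l'(1)])
  qed (use l' l'l ll' in auto)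
  have scale: "(\<lambda>x. \<bar>det (matrix l)\<bar> * f (l x + b)) absolutely_integrable_on S
      \<longleftrightarrow> (\<lambda>x. f (l x + b)) absolutely_integrable_on S"
    using det set_integrable_mult_right_iff[of "\<bar>det (matrix l)\<bar>"] by simp
  show "f absolutely_integrable_on (\<lambda>x. l x + b) ` S \<longleftrightarrow> (\<lambda>x. f (l x + b)) absolutely_integrable_on S"
    using cov scale by blast
  show "integral ((\<lambda>x. l x + b) ` S) f = \<bar>det (matrix l)\<bar> * integral S (\<lambda>x. f (l x + b))"
    if "f absolutely_integrable_on (\<lambda>x. l x + b) ` S"
    using cov[of "integral ((\<lambda>x. l x + b) ` S) f"] that by simp
qed

text \<open>The change-of-variables theorems of HOL-Analysis require a well-ordered index type.
  This predicate records the affine case for the index type \<open>'n\<close>; it is transported from a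
  well-ordered type of the same cardinality by relabelling coordinates.\<close>

definition affine_change_of_variables :: "'n::finite itself \<Rightarrow> bool" where
  "affine_change_of_variables _ \<longleftrightarrow> (\<forall>(l::real^'n \<Rightarrow> real^'n) b. linear l \<and> inj l \<longrightarrow>
     (\<exists>C>0. \<forall>(f::real^'n \<Rightarrow> real) S.
        (f absolutely_integrable_on (\<lambda>x. l x + b) ` S \<longleftrightarrow> (\<lambda>x. f (l x + b)) absolutely_integrable_on S) \<and>
        (f absolutely_integrable_on (\<lambda>x. l x + b) ` S \<longrightarrow>
           integral ((\<lambda>x. l x + b) ` S) f = C * integral S (\<lambda>x. f (l x + b)))))"

lemma affine_change_of_variablesD:
  assumes "affine_change_of_variables TYPE('n::finite)" "linear (l::real^'n \<Rightarrow> real^'n)" "inj l"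
  obtains C where "C > 0"
    "\<And>(f::real^'n \<Rightarrow> real) S.
       f absolutely_integrable_on (\<lambda>x. l x + b) ` S \<longleftrightarrow> (\<lambda>x. f (l x + b)) absolutely_integrable_on S"
    "\<And>(f::real^'n \<Rightarrow> real) S. f absolutely_integrable_on (\<lambda>x. l x + b) ` S \<Longrightarrow>
       integral ((\<lambda>x. l x + b) ` S) f = C * integral S (\<lambda>x. f (l x + b))"
proof -
  from assms obtain C where "C > 0" "\<forall>(f::real^'n \<Rightarrow> real) S.
      (f absolutely_integrable_on (\<lambda>x. l x + b) ` S \<longleftrightarrow> (\<lambda>x. f (l x + b)) absolutely_integrable_on S) \<and>
      (f absolutely_integrable_on (\<lambda>x. l x + b) ` S \<longrightarrow>
         integral ((\<lambda>x. l x + b) ` S) f = C * integral S (\<lambda>x. f (l x + b)))"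
    unfolding affine_change_of_variables_def by blast
  then show ?thesis by (intro that[of C]) auto
qed

lemma reindex_vec_conj:
  fixes p :: "'m::finite \<Rightarrow> 'n::finite" and l :: "real^'n \<Rightarrow> real^'n"
  assumes p: "bij p" and l: "linear l" "inj l"
  shows "linear (\<lambda>y. reindex_vec p (l (reindex_vec (inv p) y)))"
    and "inj (\<lambda>y. reindex_vec p (l (reindex_vec (inv p) y)))"
proof -
  show "linear (\<lambda>y. reindex_vec p (l (reindex_vec (inv p) y)))"
    using linear_compose[OF linear_compose[OF linear_reindex_vec l(1)] linear_reindex_vec]
    by (simp add: o_def)
  show "inj (\<lambda>y. reindex_vec p (l (reindex_vec (inv p) y)))"
    using l(2) reindex_vec_inv_left[OF p] reindex_vec_inv_right[OF p] by (auto simp: inj_def) metis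
qed

lemma affine_change_of_variables_bij:
  fixes p :: "'m::{finite,wellorder} \<Rightarrow> 'n::finite"
  assumes p: "bij p"
  shows "affine_change_of_variables TYPE('n)"
  unfolding affine_change_of_variables_def
proof (intro allI impI)
  fix l :: "real^'n \<Rightarrow> real^'n" and b assume l: "linear l \<and> inj l"
  define P where "P = reindex_vec p"
  define Q where "Q = reindex_vec (inv p)"
  define l' where "l' = (\<lambda>y. P (l (Q y)))"
  have QP: "Q (P x) = x" for x by (simp add: P_def Q_def reindex_vec_inv_left[OF p])
  have linl': "linear l'" and injl': "inj l'"
    using reindex_vec_conj[OF p] l unfolding l'_def P_def Q_def by auto
  have comp: "l' y + P b = P (l (Q y) + b)" for y
    by (simp add: l'_def P_def linear_add[OF linear_reindex_vec])
  have img: "(\<lambda>y. l' y + P b) ` P ` S = P ` ((\<lambda>x. l x + b) ` S)" for S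
    by (auto simp: image_image comp QP)
  define C where "C = \<bar>det (matrix l')\<bar>"
  note cov = affine_change_of_variables_wellorder[OF linl' injl', where b="P b"]
  note reindex = absolutely_integrable_reindex_vec_iff[OF p, folded P_def Q_def]
    integral_reindex_vec[OF p, folded P_def Q_def]
  show "\<exists>C>0. \<forall>(f::real^'n \<Rightarrow> real) S.
     (f absolutely_integrable_on (\<lambda>x. l x + b) ` S \<longleftrightarrow> (\<lambda>x. f (l x + b)) absolutely_integrable_on S) \<and>
     (f absolutely_integrable_on (\<lambda>x. l x + b) ` S \<longrightarrow>
        integral ((\<lambda>x. l x + b) ` S) f = C * integral S (\<lambda>x. f (l x + b)))"
  proof (rule exI[of _ C], intro conjI allI impI)
    show "C > 0" using det_nz_iff_inj[OF linl'] injl' by (simp add: C_def)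
    fix f :: "real^'n \<Rightarrow> real" and S
    have fQ: "f (Q (l' y + P b)) = f (l (Q y) + b)" for y by (simp add: comp QP)
    have "f absolutely_integrable_on (\<lambda>x. l x + b) ` S
        \<longleftrightarrow> (\<lambda>y. f (Q y)) absolutely_integrable_on (\<lambda>y. l' y + P b) ` P ` S"
      using reindex(1)[where f=f and S="(\<lambda>x. l x + b) ` S"] by (simp add: img)
    also have "\<dots> \<longleftrightarrow> (\<lambda>y. f (l (Q y) + b)) absolutely_integrable_on P ` S"
      using cov(1)[where f="\<lambda>y. f (Q y)" and S="P ` S"] by (simp add: fQ)
    also have "\<dots> \<longleftrightarrow> (\<lambda>x. f (l x + b)) absolutely_integrable_on S"
      by (rule reindex(1))
    finally show iff: "f absolutely_integrable_on (\<lambda>x. l x + b) ` S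
        \<longleftrightarrow> (\<lambda>x. f (l x + b)) absolutely_integrable_on S" .
    assume f: "f absolutely_integrable_on (\<lambda>x. l x + b) ` S"
    have "integral ((\<lambda>x. l x + b) ` S) f = integral ((\<lambda>y. l' y + P b) ` P ` S) (\<lambda>y. f (Q y))"
      using reindex(2)[where f=f and S="(\<lambda>x. l x + b) ` S"] f by (simp add: img set_lebesgue_integral_eq_integral)
    also have "\<dots> = C * integral (P ` S) (\<lambda>y. f (l (Q y) + b))"
      using cov(2)[where f="\<lambda>y. f (Q y)" and S="P ` S"] f reindex(1)[where f=f and S="(\<lambda>x. l x + b) ` S"]
      by (simp add: C_def img fQ)
    also have "integral (P ` S) (\<lambda>y. f (l (Q y) + b)) = integral S (\<lambda>x. f (l x + b))"
      using reindex(2)[where f="\<lambda>x. f (l x + b)" and S=S] f iff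
      by (simp add: set_lebesgue_integral_eq_integral)
    finally show "integral ((\<lambda>x. l x + b) ` S) f = C * integral S (\<lambda>x. f (l x + b))" .
  qed
qed

lemma affine_change_of_variables_card_2_3:
  assumes "CARD('n::finite) = 2 \<or> CARD('n) = 3"
  shows "affine_change_of_variables TYPE('n)"
  using assms
proof
  assume "CARD('n) = 2"
  then obtain p :: "2 \<Rightarrow> 'n" where "bij_betw p UNIV UNIV"
    using finite_same_card_bij[of "UNIV :: 2 set" "UNIV :: 'n set"] by auto
  then show ?thesis by (intro affine_change_of_variables_bij[of p])
next
  assume "CARD('n) = 3"
  then obtain p :: "3 \<Rightarrow> 'n" where "bij_betw p UNIV UNIV"
    using finite_same_card_bij[of "UNIV :: 3 set" "UNIV :: 'n set"] by auto
  then show ?thesis by (intro affine_change_of_variables_bij[of p])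
qed

section \<open>Polynomials\<close>

definition monomial_vec :: "('n \<Rightarrow> nat) \<Rightarrow> real^'n \<Rightarrow> real" where
  "monomial_vec \<alpha> x = (\<Prod>i\<in>UNIV. (x$i) ^ \<alpha> i)"

definition exponents_le :: "nat \<Rightarrow> ('n \<Rightarrow> nat) set" where
  "exponents_le k = {\<alpha>. sum \<alpha> UNIV \<le> k}"

lemma finite_exponents_le: "finite (exponents_le k :: ('n::finite \<Rightarrow> nat) set)"
proof (rule finite_subset)
  have "\<alpha> i \<le> sum \<alpha> UNIV" for \<alpha> :: "'n \<Rightarrow> nat" and i by (rule member_le_sum) auto
  then show "exponents_le k \<subseteq> Pi\<^sub>E (UNIV :: 'n set) (\<lambda>_. {..k})"
    by (fastforce simp: exponents_le_def intro: le_trans)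
qed (simp add: finite_PiE)

lemma poly_deg_iff_monomial_vec:
  "poly_deg k p \<longleftrightarrow> (\<exists>c. p = (\<lambda>x. \<Sum>\<alpha>\<in>exponents_le k. c \<alpha> * monomial_vec \<alpha> x))"
  by (simp add: poly_deg_def monomial_vec_def exponents_le_def)

lemma poly_deg_add: "poly_deg k p \<Longrightarrow> poly_deg k q \<Longrightarrow> poly_deg k (\<lambda>x. p x + q x)"
  unfolding poly_deg_iff_monomial_vec
proof (elim exE)
  fix c d assume "p = (\<lambda>x. \<Sum>\<alpha>\<in>exponents_le k. c \<alpha> * monomial_vec \<alpha> x)"
    "q = (\<lambda>x. \<Sum>\<alpha>\<in>exponents_le k. d \<alpha> * monomial_vec \<alpha> x)"
  then show "\<exists>e. (\<lambda>x. p x + q x) = (\<lambda>x. \<Sum>\<alpha>\<in>exponents_le k. e \<alpha> * monomial_vec \<alpha> x)"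
    by (intro exI[of _ "\<lambda>\<alpha>. c \<alpha> + d \<alpha>"]) (simp add: sum.distrib distrib_right)
qed

lemma poly_deg_cmult: "poly_deg k p \<Longrightarrow> poly_deg k (\<lambda>x. a * p x)"
  unfolding poly_deg_iff_monomial_vec
proof (elim exE)
  fix c assume "p = (\<lambda>x. \<Sum>\<alpha>\<in>exponents_le k. c \<alpha> * monomial_vec \<alpha> x)"
  then show "\<exists>e. (\<lambda>x. a * p x) = (\<lambda>x. \<Sum>\<alpha>\<in>exponents_le k. e \<alpha> * monomial_vec \<alpha> x)"
    by (intro exI[of _ "\<lambda>\<alpha>. a * c \<alpha>"]) (simp add: sum_distrib_left mult.assoc)
qed

lemma poly_deg_0: "poly_deg k (\<lambda>x. 0)"
  unfolding poly_deg_iff_monomial_vec by (intro exI[of _ "\<lambda>_. 0"]) simp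

lemma poly_deg_sum:
  "finite I \<Longrightarrow> (\<And>i. i \<in> I \<Longrightarrow> poly_deg k (f i)) \<Longrightarrow> poly_deg k (\<lambda>x. \<Sum>i\<in>I. f i x)"
  by (induction I rule: finite_induct) (auto intro: poly_deg_add poly_deg_0)

lemma poly_deg_monomial_vec:
  assumes "sum \<alpha> UNIV \<le> k"
  shows "poly_deg k (\<lambda>x. a * monomial_vec \<alpha> x)"
  unfolding poly_deg_iff_monomial_vec
proof (intro exI[of _ "\<lambda>\<beta>. if \<beta> = \<alpha> then a else 0"] ext)
  fix x
  have "(\<Sum>\<beta>\<in>exponents_le k. (if \<beta> = \<alpha> then a else 0) * monomial_vec \<beta> x)
      = (\<Sum>\<beta>\<in>exponents_le k. if \<beta> = \<alpha> then a * monomial_vec \<beta> x else 0)"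
    by (intro sum.cong) auto
  also have "\<dots> = a * monomial_vec \<alpha> x"
    using assms by (subst sum.delta[OF finite_exponents_le]) (simp add: exponents_le_def)
  finally show "a * monomial_vec \<alpha> x = (\<Sum>\<beta>\<in>exponents_le k. (if \<beta> = \<alpha> then a else 0) * monomial_vec \<beta> x)"
    by simp
qed

lemma poly_deg_mono: "k \<le> k' \<Longrightarrow> poly_deg k p \<Longrightarrow> poly_deg k' p"
  unfolding poly_deg_iff_monomial_vec
proof (elim exE)
  fix c assume "k \<le> k'" and p: "p = (\<lambda>x. \<Sum>\<alpha>\<in>exponents_le k. c \<alpha> * monomial_vec \<alpha> x)"
  moreover have "exponents_le k \<subseteq> exponents_le k'"
    using \<open>k \<le> k'\<close> by (auto simp: exponents_le_def)
  ultimately have "p = (\<lambda>x. \<Sum>\<alpha>\<in>exponents_le k'. (if \<alpha> \<in> exponents_le k then c \<alpha> else 0) * monomial_vec \<alpha> x)"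
    by (auto intro!: sum.mono_neutral_cong_left finite_exponents_le)
  then show "\<exists>e. p = (\<lambda>x. \<Sum>\<alpha>\<in>exponents_le k'. e \<alpha> * monomial_vec \<alpha> x)"
    by (rule exI[of _ "\<lambda>\<alpha>. if \<alpha> \<in> exponents_le k then c \<alpha> else 0"])
qed

lemma monomial_vec_mult: "monomial_vec \<alpha> x * monomial_vec \<beta> x = monomial_vec (\<lambda>i. \<alpha> i + \<beta> i) x"
  by (simp add: monomial_vec_def power_add prod.distrib)

lemma poly_deg_mult: "poly_deg a p \<Longrightarrow> poly_deg b q \<Longrightarrow> poly_deg (a + b) (\<lambda>x. p x * q x)"
proof -
  assume "poly_deg a p" "poly_deg b q"
  then obtain c d where p: "p = (\<lambda>x. \<Sum>\<alpha>\<in>exponents_le a. c \<alpha> * monomial_vec \<alpha> x)"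
    and q: "q = (\<lambda>x. \<Sum>\<beta>\<in>exponents_le b. d \<beta> * monomial_vec \<beta> x)"
    unfolding poly_deg_iff_monomial_vec by blast
  have "poly_deg (a + b) (\<lambda>x. \<Sum>\<alpha>\<in>exponents_le a. \<Sum>\<beta>\<in>exponents_le b.
      (c \<alpha> * d \<beta>) * monomial_vec (\<lambda>i. \<alpha> i + \<beta> i) x)"
    by (intro poly_deg_sum finite_exponents_le poly_deg_monomial_vec)
      (auto simp: exponents_le_def sum.distrib intro: add_mono)
  then show ?thesis
    by (simp add: p q sum_product monomial_vec_mult[symmetric] mult_ac)
qed

lemma poly_deg_const: "poly_deg k (\<lambda>x. a)"
proof -
  have "poly_deg k (\<lambda>x. a * monomial_vec (\<lambda>_. 0) x)" by (rule poly_deg_monomial_vec) simp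
  then show ?thesis by (simp add: monomial_vec_def)
qed

lemma poly_deg_component: "poly_deg 1 (\<lambda>x. x $ j)"
proof -
  have "poly_deg 1 (\<lambda>x. 1 * monomial_vec (\<lambda>i. if i = j then 1 else 0) x)"
    by (rule poly_deg_monomial_vec) simp
  moreover have "monomial_vec (\<lambda>i. if i = j then 1 else 0) x = x $ j" for x
    by (simp add: monomial_vec_def if_distrib[of "\<lambda>e. (x$_)^e"] prod.If_cases)
  ultimately show ?thesis by simp
qed

lemma poly_deg_prod:
  "finite I \<Longrightarrow> (\<And>i. i \<in> I \<Longrightarrow> poly_deg (d i) (f i)) \<Longrightarrow> poly_deg (\<Sum>i\<in>I. d i) (\<lambda>x. \<Prod>i\<in>I. f i x)"
proof (induction I rule: finite_induct)
  case empty then show ?case by (simp add: poly_deg_const)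
next
  case (insert i I)
  then show ?case by (simp add: poly_deg_mult)
qed

lemma poly_deg_power: "poly_deg a p \<Longrightarrow> poly_deg (a * n) (\<lambda>x. p x ^ n)"
proof (induction n)
  case 0 then show ?case by (simp add: poly_deg_const)
next
  case (Suc n)
  then have "poly_deg (a + a * n) (\<lambda>x. p x * p x ^ n)" by (intro poly_deg_mult)
  then show ?case by simp
qed

lemma poly_deg_compose:
  assumes p: "poly_deg k p" and A: "\<And>i. poly_deg 1 (\<lambda>x. A x $ i)"
  shows "poly_deg k (\<lambda>x. p (A x))"
proof -
  obtain c where c: "p = (\<lambda>x. \<Sum>\<alpha>\<in>exponents_le k. c \<alpha> * monomial_vec \<alpha> x)"
    using p unfolding poly_deg_iff_monomial_vec by blast
  have "poly_deg k (\<lambda>x. \<Sum>\<alpha>\<in>exponents_le k. c \<alpha> * monomial_vec \<alpha> (A x))"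
  proof (intro poly_deg_sum finite_exponents_le poly_deg_cmult)
    fix \<alpha> :: "'a \<Rightarrow> nat" assume "\<alpha> \<in> exponents_le k"
    then have le: "sum \<alpha> UNIV \<le> k" by (simp add: exponents_le_def)
    have "poly_deg (\<Sum>i\<in>UNIV. 1 * \<alpha> i) (\<lambda>x. \<Prod>i\<in>UNIV. (A x $ i) ^ \<alpha> i)"
      by (intro poly_deg_prod poly_deg_power A) simp
    then show "poly_deg k (\<lambda>x. monomial_vec \<alpha> (A x))"
      using le by (auto simp: monomial_vec_def intro: poly_deg_mono)
  qed
  then show ?thesis by (simp add: c)
qed

lemma poly_deg_affine_component: "poly_deg 1 (\<lambda>x. (M *v x + b) $ i)"
proof -
  have "poly_deg 1 (\<lambda>x. (\<Sum>j\<in>UNIV. M $ i $ j * x $ j) + b $ i)"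
    by (intro poly_deg_add poly_deg_sum poly_deg_cmult poly_deg_component poly_deg_const) auto
  then show ?thesis by (simp add: matrix_vector_mult_def)
qed

lemma continuous_on_poly_deg: "poly_deg k p \<Longrightarrow> continuous_on S p"
  unfolding poly_deg_def by (auto intro!: continuous_intros)

lemma continuous_on_poly_mat: "poly_mat k \<tau> \<Longrightarrow> continuous_on S (\<lambda>x. \<tau> x $ i $ j)"
  unfolding poly_mat_def using continuous_on_poly_deg by blast

lemma continuous_on_poly_vec: "poly_vec k q \<Longrightarrow> continuous_on S q"
proof -
  assume "poly_vec k q"
  then have "continuous_on S (\<lambda>x. \<chi> i. q x $ i)"
    unfolding poly_vec_def by (intro continuous_on_vec_lambda continuous_on_poly_deg) auto
  then show ?thesis by simp
qed

lemma matrix_mul3_nth: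
  "(B ** A ** C :: real^'n^'n) $ i $ j = (\<Sum>k\<in>UNIV. \<Sum>l\<in>UNIV. (B $ i $ k * C $ l $ j) * A $ k $ l)"
proof -
  have "(B ** A ** C) $ i $ j = (\<Sum>l\<in>UNIV. (\<Sum>k\<in>UNIV. B $ i $ k * A $ k $ l) * C $ l $ j)"
    by (simp add: matrix_matrix_mult_def)
  also have "\<dots> = (\<Sum>l\<in>UNIV. \<Sum>k\<in>UNIV. (B $ i $ k * C $ l $ j) * A $ k $ l)"
    by (intro sum.cong refl) (simp add: sum_distrib_right sum_distrib_left mult_ac)
  also have "\<dots> = (\<Sum>k\<in>UNIV. \<Sum>l\<in>UNIV. (B $ i $ k * C $ l $ j) * A $ k $ l)"
    by (rule sum.swap)
  finally show ?thesis .
qed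

lemma poly_mat_conj_compose_affine:
  assumes "poly_mat k \<eta>"
  shows "poly_mat k (\<lambda>x. c *\<^sub>R (B ** \<eta> (M *v x + d) ** C))"
proof -
  have "poly_deg k (\<lambda>x. \<eta> (M *v x + d) $ i $ j)" for i j
    by (rule poly_deg_compose[OF assms[unfolded poly_mat_def, rule_format] poly_deg_affine_component])
  then show ?thesis
    unfolding poly_mat_def matrix_mul3_nth vector_scaleR_component real_scaleR_def
    by (intro allI poly_deg_cmult poly_deg_sum) simp_all
qed

lemma poly_vec_matrix_compose_affine:
  assumes "poly_vec k q"
  shows "poly_vec k (\<lambda>x. L *v q (M *v x + b))"
proof -
  have "poly_deg k (\<lambda>x. q (M *v x + b) $ j)" for j
    by (rule poly_deg_compose[OF assms[unfolded poly_vec_def, rule_format] poly_deg_affine_component])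
  moreover have "(L *v y) $ i = (\<Sum>j\<in>UNIV. L $ i $ j * y $ j)" for y i
    by (simp add: matrix_vector_mult_def)
  ultimately show ?thesis
    unfolding poly_vec_def by (simp add: poly_deg_cmult poly_deg_sum)
qed

section \<open>Matrices, affine images and facets\<close>

lemma matrix_inv:
  assumes "invertible (A::real^'n^'n)"
  shows matrix_inv_right: "A ** matrix_inv A = mat 1"
    and matrix_inv_left: "matrix_inv A ** A = mat 1"
proof -
  have "\<exists>A'. A ** A' = mat 1 \<and> A' ** A = mat 1" using assms by (simp add: invertible_def)
  then have "A ** matrix_inv A = mat 1 \<and> matrix_inv A ** A = mat 1"
    unfolding matrix_inv_def by (rule someI_ex)
  then show "A ** matrix_inv A = mat 1" "matrix_inv A ** A = mat 1" by auto
qed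

lemma matrix_inv_unique:
  assumes "(A::real^'n^'n) ** B = mat 1" "B ** A = mat 1"
  shows "matrix_inv A = B"
proof -
  have "invertible A" using assms by (auto simp: invertible_def)
  have "matrix_inv A = (B ** A) ** matrix_inv A" by (simp add: assms)
  also have "\<dots> = B ** (A ** matrix_inv A)" by (simp add: matrix_mul_assoc)
  also have "\<dots> = B" by (simp add: matrix_inv_right[OF \<open>invertible A\<close>])
  finally show ?thesis .
qed

lemma invertible_matrix_inv: "invertible (A::real^'n^'n) \<Longrightarrow> invertible (matrix_inv A)"
  using matrix_inv by (auto simp: invertible_def)

lemma matrix_inv_matrix_inv: "invertible (A::real^'n^'n) \<Longrightarrow> matrix_inv (matrix_inv A) = A"
  using matrix_inv by (intro matrix_inv_unique) auto

lemma matrix_inv_transpose: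
  "invertible (A::real^'n^'n) \<Longrightarrow> matrix_inv (transpose A) = transpose (matrix_inv A)"
  using matrix_inv[of A]
  by (intro matrix_inv_unique) (simp_all add: matrix_transpose_mul[symmetric] transpose_mat)

lemma matrix_inv_mult:
  assumes "invertible (A::real^'n^'n)" "invertible (B::real^'n^'n)"
  shows "matrix_inv (A ** B) = matrix_inv B ** matrix_inv A"
proof (rule matrix_inv_unique)
  show "A ** B ** (matrix_inv B ** matrix_inv A) = mat 1"
    by (metis assms matrix_inv_right matrix_mul_assoc matrix_mul_rid)
  show "matrix_inv B ** matrix_inv A ** (A ** B) = mat 1"
    by (metis assms matrix_inv_left matrix_mul_assoc matrix_mul_rid)
qed

lemma matrix_inv_cancel_left: "invertible (A::real^'n^'n) \<Longrightarrow> matrix_inv A *v (A *v x) = x"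
  by (simp add: matrix_vector_mul_assoc matrix_inv_left)

lemma matrix_inv_cancel_right: "invertible (A::real^'n^'n) \<Longrightarrow> A *v (matrix_inv A *v x) = x"
  by (simp add: matrix_vector_mul_assoc matrix_inv_right)

lemma affine_image_translation: "(\<lambda>x. G *v x + b) ` S = (+) b ` ((*v) G ` S)"
  by (auto simp: image_iff add.commute)

lemma facet_of_affine_image:
  assumes G: "invertible (G::real^'n^'n)" and F: "F facet_of K"
  shows "(\<lambda>x. G *v x + b) ` F facet_of (\<lambda>x. G *v x + b) ` K"
proof -
  have lin: "linear ((*v) G)" by (rule matrix_vector_mul_linear)
  have inj: "inj ((*v) G)" by (rule inj_matrix_vector_mult[OF G])
  from F have "F face_of K" "F \<noteq> {}" "aff_dim F = aff_dim K - 1" by (auto simp: facet_of_def)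
  then show ?thesis
    unfolding affine_image_translation facet_of_def
    using face_of_linear_image[OF lin inj] aff_dim_injective_linear_image[OF lin inj]
    by (simp add: aff_dim_translation_eq)
qed

lemma aff_dim_affine_image:
  assumes G: "invertible (G::real^'n^'n)"
  shows "aff_dim ((\<lambda>x. G *v x + b) ` K) = aff_dim K"
proof -
  have lin: "linear ((*v) G)" by (rule matrix_vector_mul_linear)
  have inj: "inj ((*v) G)" by (rule inj_matrix_vector_mult[OF G])
  show ?thesis unfolding affine_image_translation
    by (simp add: aff_dim_translation_eq aff_dim_injective_linear_image[OF lin inj])
qed

lemma compact_affine_image: "compact K \<Longrightarrow> compact ((\<lambda>x. (G::real^'n^'n) *v x + b) ` K)"
  by (intro compact_continuous_image continuous_intros) auto

lemma convex_affine_image: "convex K \<Longrightarrow> convex ((\<lambda>x. (G::real^'n^'n) *v x + b) ` K)"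
  unfolding affine_image_translation
  by (intro convex_translation convex_linear_image matrix_vector_mul_linear)

lemma compact_ref_simplex: "compact (ref_simplex :: (real^'n) set)"
proof -
  have cl: "closed (ref_simplex :: (real^'n) set)"
  proof -
    have "ref_simplex = (\<Inter>i. {x::real^'n. 0 \<le> x $ i}) \<inter> {x. (\<Sum>i\<in>UNIV. x $ i) \<le> 1}"
      by (auto simp: ref_simplex_def)
    also have "closed \<dots>"
      by (intro closed_Int closed_INT ballI closed_Collect_le continuous_intros)
    finally show ?thesis .
  qed
  have "ref_simplex \<subseteq> cbox (0::real^'n) 1"
  proof
    fix x :: "real^'n" assume x: "x \<in> ref_simplex"
    have "x $ i \<le> 1" for i
    proof -
      have "x $ i \<le> (\<Sum>j\<in>UNIV. x $ j)"
        using x by (intro member_le_sum) (auto simp: ref_simplex_def)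
      then show ?thesis using x by (auto simp: ref_simplex_def)
    qed
    then show "x \<in> cbox 0 1" using x by (auto simp: mem_box_cart ref_simplex_def)
  qed
  then have "bounded (ref_simplex :: (real^'n) set)" using bounded_cbox bounded_subset by blast
  then show ?thesis using cl by (simp add: compact_eq_bounded_closed)
qed

lemma convex_ref_simplex: "convex (ref_simplex :: (real^'n) set)"
proof (rule convexI)
  fix x y :: "real^'n" and u v :: real
  assume "x \<in> ref_simplex" "y \<in> ref_simplex" and uv: "0 \<le> u" "0 \<le> v" "u + v = 1"
  then have x: "\<And>i. 0 \<le> x $ i" "sum (($) x) UNIV \<le> 1" and y: "\<And>i. 0 \<le> y $ i" "sum (($) y) UNIV \<le> 1"
    by (auto simp: ref_simplex_def)
  have "(\<Sum>i\<in>UNIV. u * x $ i + v * y $ i) = u * sum (($) x) UNIV + v * sum (($) y) UNIV"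
    by (simp add: sum.distrib sum_distrib_left)
  also have "\<dots> \<le> u * 1 + v * 1" using x y uv by (intro add_mono mult_left_mono) auto
  finally show "u *\<^sub>R x + v *\<^sub>R y \<in> ref_simplex"
    using x y uv by (simp add: ref_simplex_def)
qed

lemma aff_dim_ref_simplex: "aff_dim (ref_simplex :: (real^'n) set) = int CARD('n)"
proof -
  have z: "(0::real^'n) \<in> ref_simplex" by (simp add: ref_simplex_def)
  have "aff_dim (ref_simplex :: (real^'n) set) = int (dim (ref_simplex :: (real^'n) set))"
    using z by (intro aff_dim_zero) (simp add: hull_inc)
  moreover have "(Basis :: (real^'n) set) \<subseteq> ref_simplex"
  proof
    fix v :: "real^'n" assume "v \<in> Basis"
    then obtain i where v: "v = axis i 1" by (auto simp: Basis_vec_def)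
    have "(\<Sum>j\<in>UNIV. axis i (1::real) $ j) = 1" by (simp add: axis_def)
    then show "v \<in> ref_simplex" by (simp add: v ref_simplex_def axis_def)
  qed
  then have "dim (Basis :: (real^'n) set) \<le> dim (ref_simplex :: (real^'n) set)" by (rule dim_subset)
  moreover have "dim (Basis :: (real^'n) set) = CARD('n)"
    by (metis dim_UNIV dim_span span_Basis DIM_cart DIM_real mult_1_right)
  moreover have "dim (ref_simplex :: (real^'n) set) \<le> CARD('n)"
    using dim_subset_UNIV[of "ref_simplex :: (real^'n) set"] by simp
  ultimately show ?thesis by simp
qed

lemma dim_facet_translate:
  fixes F K :: "(real^'n) set"
  assumes "F facet_of K" "aff_dim K = int CARD('n)" "a \<in> F"
  shows "dim ((\<lambda>x. x - a) ` F) = CARD('n) - 1"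
proof -
  have "aff_dim F = int CARD('n) - 1" using assms by (simp add: facet_of_def)
  moreover have "aff_dim F = int (dim ((\<lambda>x. x - a) ` F))"
    using assms(3) by (intro aff_dim_eq_dim_subtract) (simp add: hull_inc)
  ultimately show ?thesis by linarith
qed

lemma facet_normal_exists:
  fixes F K :: "(real^'n) set"
  assumes F: "F facet_of K" and K: "aff_dim K = int CARD('n)"
  shows "\<exists>n. norm n = 1 \<and> (\<forall>x\<in>F. \<forall>y\<in>F. n \<bullet> (x - y) = 0)"
proof -
  obtain a where a: "a \<in> F" using F by (auto simp: facet_of_def)
  have "dim ((\<lambda>x. x - a) ` F) < DIM(real^'n)" using dim_facet_translate[OF F K a] by simp
  then obtain v where v: "v \<noteq> 0" "\<And>y. y \<in> span ((\<lambda>x. x - a) ` F) \<Longrightarrow> orthogonal v y"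
    using orthogonal_to_subspace_exists by metis
  have "(v /\<^sub>R norm v) \<bullet> (x - y) = 0" if "x \<in> F" "y \<in> F" for x y
  proof -
    have "x - a \<in> span ((\<lambda>x. x - a) ` F)" "y - a \<in> span ((\<lambda>x. x - a) ` F)"
      using that by (auto intro: span_base)
    then have "x - y \<in> span ((\<lambda>x. x - a) ` F)"
      using span_diff by fastforce
    then show ?thesis using v(2) by (simp add: orthogonal_def)
  qed
  then show ?thesis using v(1) by (intro exI[of _ "v /\<^sub>R norm v"]) simp
qed

lemma facet_normal:
  fixes F K :: "(real^'n) set"
  assumes "F facet_of K" "aff_dim K = int CARD('n)"
  shows facet_normal_inner_self: "facet_normal F \<bullet> facet_normal F = 1"
    and facet_normal_orthogonal: "\<And>x y. x \<in> F \<Longrightarrow> y \<in> F \<Longrightarrow> facet_normal F \<bullet> (x - y) = 0"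
proof -
  have "norm (facet_normal F) = 1 \<and> (\<forall>x\<in>F. \<forall>y\<in>F. facet_normal F \<bullet> (x - y) = 0)"
    unfolding facet_normal_def using facet_normal_exists[OF assms] by (rule someI_ex)
  then show "facet_normal F \<bullet> facet_normal F = 1"
    "\<And>x y. x \<in> F \<Longrightarrow> y \<in> F \<Longrightarrow> facet_normal F \<bullet> (x - y) = 0"
    by (auto simp: norm_eq_1)
qed

lemma facet_orthogonal_parallel_normal:
  fixes F K :: "(real^'n) set"
  assumes F: "F facet_of K" and K: "aff_dim K = int CARD('n)"
    and m: "\<And>x y. x \<in> F \<Longrightarrow> y \<in> F \<Longrightarrow> m \<bullet> (x - y) = 0"
  shows "m = (m \<bullet> facet_normal F) *\<^sub>R facet_normal F"
proof -
  define n where "n = facet_normal F"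
  have nn: "n \<bullet> n = 1" and nF: "\<And>x y. x \<in> F \<Longrightarrow> y \<in> F \<Longrightarrow> n \<bullet> (x - y) = 0"
    unfolding n_def using facet_normal[OF F K] by auto
  obtain a where a: "a \<in> F" using F by (auto simp: facet_of_def)
  define S where "S = (\<lambda>x. x - a) ` F"
  define w where "w = m - (m \<bullet> n) *\<^sub>R n"
  have wS: "orthogonal w y" if "y \<in> S" for y
    using that nF m a by (auto simp: S_def w_def orthogonal_def inner_diff_left)
  have "w \<bullet> n = m \<bullet> n - (m \<bullet> n) * (n \<bullet> n)" by (simp add: w_def inner_diff_left)
  then have wn: "orthogonal w n" by (simp add: orthogonal_def nn)
  have "n \<notin> span S"
  proof
    assume "n \<in> span S"
    moreover have "orthogonal n y" if "y \<in> S" for y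
      using that nF a by (auto simp: S_def orthogonal_def)
    ultimately have "orthogonal n n" using orthogonal_to_span by blast
    then show False using nn by (simp add: orthogonal_def)
  qed
  then have "dim (insert n S) = dim S + 1" by (simp add: dim_insert)
  also have "\<dots> = DIM(real^'n)"
    using dim_facet_translate[OF F K a] by (simp add: S_def Suc_leI)
  finally have "span (insert n S) = UNIV" using dim_eq_full by blast
  moreover have "orthogonal w y" if "y \<in> insert n S" for y using that wS wn by auto
  ultimately have "orthogonal w w" using orthogonal_to_span by blast
  then show ?thesis by (simp add: w_def n_def orthogonal_def)
qed

lemma inner_matrix_vector_transpose: "n \<bullet> ((G::real^'n^'n) *v w) = (transpose G *v n) \<bullet> w"
  by (simp add: dot_lmul_matrix[symmetric])

lemma transpose_facet_normal_affine_image: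
  fixes G :: "real^'n^'n"
  assumes G: "invertible G" and F0: "F0 facet_of K0" and K0: "aff_dim K0 = int CARD('n)"
  obtains lam where "lam \<noteq> 0"
    "transpose G *v facet_normal ((\<lambda>x. G *v x + b) ` F0) = lam *\<^sub>R facet_normal F0"
proof -
  define \<psi> where "\<psi> = (\<lambda>x. G *v x + b)"
  have F: "\<psi> ` F0 facet_of \<psi> ` K0" unfolding \<psi>_def by (rule facet_of_affine_image[OF G F0])
  have K: "aff_dim (\<psi> ` K0) = int CARD('n)" unfolding \<psi>_def by (simp add: aff_dim_affine_image[OF G] K0)
  define n where "n = facet_normal (\<psi> ` F0)"
  define m where "m = transpose G *v n"
  have "m \<bullet> (x - y) = 0" if "x \<in> F0" "y \<in> F0" for x y
  proof -
    have "m \<bullet> (x - y) = n \<bullet> (G *v (x - y))" by (simp add: m_def inner_matrix_vector_transpose)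
    also have "G *v (x - y) = \<psi> x - \<psi> y" by (simp add: \<psi>_def matrix_vector_mult_diff_distrib)
    also have "n \<bullet> (\<psi> x - \<psi> y) = 0" using facet_normal_orthogonal[OF F K] that by (simp add: n_def)
    finally show ?thesis .
  qed
  then have m: "m = (m \<bullet> facet_normal F0) *\<^sub>R facet_normal F0"
    by (rule facet_orthogonal_parallel_normal[OF F0 K0])
  have "n \<noteq> 0" using facet_normal_inner_self[OF F K] by (auto simp: n_def)
  then have "m \<noteq> 0" using inj_matrix_vector_mult[OF transpose_invertible[OF G]]
    by (metis m_def injD matrix_vector_mult_0_right)
  with m have "m \<bullet> facet_normal F0 \<noteq> 0" by (metis scale_zero_left)
  with m show ?thesis using that by (simp add: m_def n_def \<psi>_def)
qed

lemma compact_facet_prism: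
  assumes "compact F" shows "compact (facet_prism F)"
proof -
  have "facet_prism F = (\<lambda>p. fst p + snd p *\<^sub>R facet_normal F) ` (F \<times> {0..1})"
    unfolding facet_prism_def by (auto simp: image_iff; force)
  also have "compact \<dots>"
    by (intro compact_continuous_image compact_Times assms compact_Icc continuous_intros)
  finally show ?thesis .
qed

lemma continuous_on_facet_proj: "continuous_on S (facet_proj F)"
  unfolding facet_proj_def Let_def by (intro continuous_intros)

lemma facet_proj_add_normal:
  fixes F K :: "(real^'n) set"
  assumes F: "F facet_of K" and K: "aff_dim K = int CARD('n)" and y: "y \<in> F"
  shows "facet_proj F (y + t *\<^sub>R facet_normal F) = y"
proof -
  define n where "n = facet_normal F"
  define a where "a = (SOME a. a \<in> F)"
  have "a \<in> F" using F by (simp add: a_def some_in_eq facet_of_def)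
  then have "(y - a) \<bullet> n = 0"
    using facet_normal_orthogonal[OF F K y] by (simp add: n_def inner_commute)
  then have "(y + t *\<^sub>R n - a) \<bullet> n = t"
    using facet_normal_inner_self[OF F K] by (simp add: n_def inner_diff_left inner_add_left algebra_simps)
  then show ?thesis by (simp add: facet_proj_def Let_def a_def[symmetric] n_def[symmetric])
qed

lemma linear_inj_tangential_normal_map:
  fixes G :: "real^'n^'n"
  assumes G: "invertible G" and m0: "m0 \<bullet> m0 = 1" and m: "m \<bullet> m = 1"
    and Gm: "transpose G *v m = lam *\<^sub>R m0"
  shows "linear (\<lambda>v. G *v (v - (v \<bullet> m0) *\<^sub>R m0) + (v \<bullet> m0) *\<^sub>R m)" (is "linear ?l")
    and "inj (\<lambda>v. G *v (v - (v \<bullet> m0) *\<^sub>R m0) + (v \<bullet> m0) *\<^sub>R m)"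
proof -
  show lin: "linear ?l"
    unfolding linear_iff
    by (auto simp: inner_add_left matrix_vector_mult_diff_distrib matrix_vector_right_distrib
        matrix_vector_mult_scaleR algebra_simps)
  show "inj ?l"
  proof (rule linear_injective_0[OF lin, THEN iffD2], intro allI impI)
    fix v assume lv: "?l v = 0"
    define w where "w = v - (v \<bullet> m0) *\<^sub>R m0"
    have "m \<bullet> (G *v w) = lam * (m0 \<bullet> w)"
      by (simp only: inner_matrix_vector_transpose Gm inner_scaleR_left)
    also have "m0 \<bullet> w = 0" by (simp add: w_def inner_diff_right m0 inner_commute)
    finally have "m \<bullet> (G *v w) = 0" by simp
    moreover have "m \<bullet> ?l v = m \<bullet> (G *v w) + (v \<bullet> m0)" by (simp add: w_def inner_add_right m)
    ultimately have "v \<bullet> m0 = 0" using lv by simp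
    then have "G *v v = 0" using lv by simp
    then show "v = 0" using inj_matrix_vector_mult[OF G] by (metis injD matrix_vector_mult_0_right)
  qed
qed

text \<open>The map below acts as \<open>G\<close> on directions tangent to the facet and sends its unit normal
  to the unit normal of the image facet, so it maps the unit-height prism onto the unit-height
  prism and commutes with the projections.\<close>

lemma facet_prism_affine_image:
  fixes G :: "real^'n^'n" and b :: "real^'n"
  defines "\<psi> \<equiv> (\<lambda>x. G *v x + b)"
  assumes G: "invertible G" and F0: "F0 facet_of K0" and K0: "aff_dim K0 = int CARD('n)"
  obtains l c where "linear l" "inj l" "(\<lambda>x. l x + c) ` facet_prism F0 = facet_prism (\<psi> ` F0)"
    "\<And>x. x \<in> facet_prism F0 \<Longrightarrow> facet_proj (\<psi> ` F0) (l x + c) = \<psi> (facet_proj F0 x)"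
proof -
  define F where "F = \<psi> ` F0"
  have F: "F facet_of \<psi> ` K0" unfolding F_def \<psi>_def by (rule facet_of_affine_image[OF G F0])
  have K: "aff_dim (\<psi> ` K0) = int CARD('n)"
    unfolding \<psi>_def by (simp add: aff_dim_affine_image[OF G] K0)
  define m0 where "m0 = facet_normal F0"
  define m where "m = facet_normal F"
  obtain lam where lam: "transpose G *v m = lam *\<^sub>R m0"
    using transpose_facet_normal_affine_image[OF G F0 K0, of b] unfolding m_def m0_def F_def \<psi>_def
    by blast
  obtain a where a: "a \<in> F0" using F0 by (auto simp: facet_of_def)
  define l where "l = (\<lambda>v. G *v (v - (v \<bullet> m0) *\<^sub>R m0) + (v \<bullet> m0) *\<^sub>R m)"
  define c where "c = G *v ((a \<bullet> m0) *\<^sub>R m0) + b - (a \<bullet> m0) *\<^sub>R m"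
  have l: "linear l" "inj l"
    using linear_inj_tangential_normal_map[OF G _ _ lam] facet_normal_inner_self[OF F0 K0]
      facet_normal_inner_self[OF F K] by (simp_all add: l_def m0_def m_def)
  have lc: "l (y + t *\<^sub>R m0) + c = \<psi> y + t *\<^sub>R m" if "y \<in> F0" for y t
  proof -
    have "(y - a) \<bullet> m0 = 0"
      using facet_normal_orthogonal[OF F0 K0 that a] by (simp add: m0_def inner_commute)
    moreover have "m0 \<bullet> m0 = 1" using facet_normal_inner_self[OF F0 K0] by (simp add: m0_def)
    ultimately show ?thesis
      by (simp add: l_def c_def \<psi>_def inner_add_left inner_diff_left matrix_vector_right_distrib
          matrix_vector_mult_diff_distrib scaleR_add_left scaleR_diff_left algebra_simps)
  qed
  have "(\<lambda>x. l x + c) ` facet_prism F0 = facet_prism F"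
  proof
    show "(\<lambda>x. l x + c) ` facet_prism F0 \<subseteq> facet_prism F"
      using lc by (force simp: facet_prism_def F_def m_def[unfolded F_def] m0_def)
    show "facet_prism F \<subseteq> (\<lambda>x. l x + c) ` facet_prism F0"
    proof
      fix z assume "z \<in> facet_prism F"
      then obtain y t where yt: "y \<in> F0" "t \<in> {0..1}" "z = \<psi> y + t *\<^sub>R m"
        by (auto simp: facet_prism_def F_def m_def)
      then have "z = l (y + t *\<^sub>R m0) + c" using lc by simp
      moreover have "y + t *\<^sub>R m0 \<in> facet_prism F0" using yt by (auto simp: facet_prism_def m0_def)
      ultimately show "z \<in> (\<lambda>x. l x + c) ` facet_prism F0" by blast
    qed
  qed
  moreover have "facet_proj F (l x + c) = \<psi> (facet_proj F0 x)" if x: "x \<in> facet_prism F0" for x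
  proof -
    obtain y t where y: "y \<in> F0" and x: "x = y + t *\<^sub>R m0"
      using x unfolding facet_prism_def m0_def by blast
    have "\<psi> y \<in> F" using y by (simp add: F_def)
    then show ?thesis
      using facet_proj_add_normal[OF F0 K0 y, folded m0_def]
        facet_proj_add_normal[OF F K, of "\<psi> y" t, folded m_def]
      by (simp add: x lc[OF y])
  qed
  ultimately show ?thesis using that l unfolding F_def by blast
qed

section \<open>Normal-tangential components\<close>

definition normal_tangential :: "real^'n \<Rightarrow> real^'n^'n \<Rightarrow> real^'n" where
  "normal_tangential n A = A *v n - (n \<bullet> (A *v n)) *\<^sub>R n"

lemma nt_eq_normal_tangential: "nt F A = normal_tangential (facet_normal F) A"
  by (simp add: nt_def normal_tangential_def Let_def)

lemma normal_tangential_conj: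
  fixes B A :: "real^'n^'n"
  assumes B: "invertible B" and n0: "n0 \<bullet> n0 = 1" and Bn: "B *v n = lam *\<^sub>R n0" and lam: "lam \<noteq> 0"
  shows "normal_tangential n0 (c *\<^sub>R (B ** A ** matrix_inv B)) =
         (c / lam) *\<^sub>R (B *v normal_tangential n A - (n0 \<bullet> (B *v normal_tangential n A)) *\<^sub>R n0)"
proof -
  have "n = matrix_inv B *v (B *v n)" by (simp add: matrix_inv_cancel_left[OF B])
  also have "\<dots> = lam *\<^sub>R (matrix_inv B *v n0)" by (simp add: Bn matrix_vector_mult_scaleR)
  finally have Bn0: "matrix_inv B *v n0 = (1 / lam) *\<^sub>R n" using lam by (simp add: field_simps)
  define a where "a = n \<bullet> (A *v n)"
  define u where "u = B *v normal_tangential n A"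
  have "B *v (A *v n) = u + (a * lam) *\<^sub>R n0"
    by (simp add: u_def normal_tangential_def a_def matrix_vector_mult_diff_distrib
        matrix_vector_mult_scaleR Bn)
  then have "c *\<^sub>R (B ** A ** matrix_inv B) *v n0 = (c / lam) *\<^sub>R u + (c * a) *\<^sub>R n0"
    using lam by (simp add: scaleR_matrix_vector_assoc[symmetric] matrix_vector_mul_assoc[symmetric]
        Bn0 matrix_vector_mult_scaleR scaleR_add_right)
  then have "normal_tangential n0 (c *\<^sub>R (B ** A ** matrix_inv B))
      = ((c / lam) *\<^sub>R u + (c * a) *\<^sub>R n0) - (n0 \<bullet> ((c / lam) *\<^sub>R u + (c * a) *\<^sub>R n0)) *\<^sub>R n0"
    by (simp only: normal_tangential_def)
  also have "\<dots> = (c / lam) *\<^sub>R (u - (n0 \<bullet> u) *\<^sub>R n0)"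
    by (simp add: inner_add_right n0 scaleR_diff_right scaleR_add_left)
  finally show ?thesis by (simp only: u_def)
qed

text \<open>Up to the nonzero factor relating the normals, conjugation by \<open>B\<close> acts on the
  normal-tangential component as \<open>B\<close> followed by the orthogonal projection onto the new
  tangent space, a fixed matrix.\<close>

lemma normal_tangential_conj_linear:
  fixes B :: "real^'n^'n"
  assumes "invertible B" "n0 \<bullet> n0 = 1" "B *v n = lam *\<^sub>R n0" "lam \<noteq> 0"
  obtains L where "\<And>A. normal_tangential n0 (c *\<^sub>R (B ** A ** matrix_inv B)) = L *v normal_tangential n A"
proof
  define P :: "real^'n^'n" where "P = mat 1 - (\<chi> i j. n0 $ i * n0 $ j)"
  have P: "P *v v = v - (n0 \<bullet> v) *\<^sub>R n0" for v
  proof -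
    have "(\<chi> i j. n0 $ i * n0 $ j) *v v = (n0 \<bullet> v) *\<^sub>R n0"
      unfolding vec_eq_iff matrix_vector_mult_def inner_vec_def inner_real_def
      by (simp add: sum_distrib_left sum_distrib_right mult_ac)
    then show ?thesis by (simp add: P_def matrix_vector_mult_diff_rdistrib)
  qed
  show "normal_tangential n0 (c *\<^sub>R (B ** A ** matrix_inv B))
      = ((c / lam) *\<^sub>R (P ** B)) *v normal_tangential n A" for A
    using normal_tangential_conj[OF assms, of c A]
    by (simp only: P[symmetric] scaleR_matrix_vector_assoc[symmetric] matrix_vector_mul_assoc)
qed

lemma frob_eq_trace: "frob X Y = trace (transpose X ** (Y :: real^'n^'n))"
proof -
  have "trace (transpose X ** Y) = (\<Sum>i\<in>UNIV. \<Sum>j\<in>UNIV. X$j$i * Y$j$i)"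
    by (simp add: trace_def matrix_matrix_mult_def transpose_def)
  also have "\<dots> = (\<Sum>j\<in>UNIV. \<Sum>i\<in>UNIV. X$j$i * Y$j$i)" by (rule sum.swap)
  finally show ?thesis by (simp add: frob_def)
qed

lemma frob_scaleR_conj:
  "frob (c *\<^sub>R (B ** A ** C)) (D :: real^'n^'n) = c * frob A (transpose B ** D ** transpose C)"
proof -
  have "frob (B ** A ** C) D = trace (transpose C ** transpose A ** transpose B ** D)"
    by (simp add: frob_eq_trace matrix_transpose_mul matrix_mul_assoc)
  also have "\<dots> = trace (transpose A ** (transpose B ** D ** transpose C))"
    using trace_mul_sym[of "transpose C" "transpose A ** transpose B ** D"]
    by (simp add: matrix_mul_assoc)
  also have "\<dots> = frob A (transpose B ** D ** transpose C)" by (simp add: frob_eq_trace)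
  finally have "frob (B ** A ** C) D = frob A (transpose B ** D ** transpose C)" .
  moreover have "frob (c *\<^sub>R X) D = c * frob X D" for X
    by (simp add: frob_def sum_distrib_left mult_ac)
  ultimately show ?thesis by simp
qed

lemma trace_scaleR_conj:
  assumes "invertible (B::real^'n^'n)"
  shows "trace (c *\<^sub>R (B ** A ** matrix_inv B)) = c * trace A"
proof -
  have "trace (B ** A ** matrix_inv B) = trace (matrix_inv B ** (B ** A))"
    using trace_mul_sym[of "B ** A" "matrix_inv B"] by simp
  also have "\<dots> = trace A" by (simp add: matrix_mul_assoc matrix_inv_left[OF assms])
  finally have "trace (B ** A ** matrix_inv B) = trace A" .
  moreover have "trace (c *\<^sub>R X) = c * trace X" for X :: "real^'n^'n"
    by (simp add: trace_def sum_distrib_left)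
  ultimately show ?thesis by simp
qed

definition nt_adjoint :: "real^'n \<Rightarrow> real^'n \<Rightarrow> real^'n^'n" where
  "nt_adjoint n v = (\<chi> i j. v $ i * n $ j - (n \<bullet> v) * n $ i * n $ j)"

lemma normal_tangential_inner: "normal_tangential n A \<bullet> v = frob A (nt_adjoint n v)"
proof -
  have 1: "(A *v n) \<bullet> v = (\<Sum>i\<in>UNIV. \<Sum>j\<in>UNIV. A $ i $ j * (v $ i * n $ j))"
    unfolding inner_vec_def inner_real_def matrix_vector_mult_def
    by (intro sum.cong refl) (simp add: sum_distrib_right sum_distrib_left mult_ac)
  have 2: "(n \<bullet> (A *v n)) * (n \<bullet> v) = (\<Sum>i\<in>UNIV. \<Sum>j\<in>UNIV. A $ i $ j * ((n \<bullet> v) * n $ i * n $ j))"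
    unfolding inner_vec_def inner_real_def matrix_vector_mult_def sum_distrib_right
    by (intro sum.cong refl) (simp add: sum_distrib_right sum_distrib_left mult_ac)
  have "normal_tangential n A \<bullet> v = (A *v n) \<bullet> v - (n \<bullet> (A *v n)) * (n \<bullet> v)"
    by (simp add: normal_tangential_def inner_diff_left)
  also have "\<dots> = frob A (nt_adjoint n v)"
    unfolding 1 2 frob_def nt_adjoint_def by (simp add: sum_subtractf right_diff_distrib)
  finally show ?thesis .
qed

section \<open>Transformation of matrix fields\<close>

lemma absolutely_integrable_continuous_mult:
  fixes f g :: "real^'n \<Rightarrow> real"
  assumes S: "compact S" and g: "continuous_on S g" and f: "f absolutely_integrable_on S"
  shows "(\<lambda>x. g x * f x) absolutely_integrable_on S"
proof -
  have S': "S \<in> sets lebesgue" using lmeasurable_compact[OF S] by blast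
  have "g \<in> borel_measurable (lebesgue_on S)"
    by (rule continuous_imp_measurable_on_sets_lebesgue[OF g S'])
  moreover have "bounded (g ` S)" using compact_continuous_image[OF g S] compact_imp_bounded by blast
  ultimately show ?thesis
    using absolutely_integrable_bounded_measurable_product[OF bilinear_times _ S' _ f] by simp
qed

lemma absolutely_integrable_continuous_compact:
  fixes g :: "real^'n \<Rightarrow> real"
  assumes "compact S" "continuous_on S g"
  shows "g absolutely_integrable_on S"
  using absolutely_integrable_continuous_mult[OF assms
      absolutely_integrable_on_const[OF lmeasurable_compact[OF assms(1)], of 1]]
  by simp

lemma absolutely_integrable_frob_continuous:
  fixes \<rho> B :: "real^'n \<Rightarrow> real^'n^'n"
  assumes S: "compact S" and \<rho>: "\<And>i j. (\<lambda>x. \<rho> x $ i $ j) absolutely_integrable_on S"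
    and B: "\<And>i j. continuous_on S (\<lambda>x. B x $ i $ j)"
  shows "(\<lambda>x. frob (\<rho> x) (B x)) absolutely_integrable_on S"
  unfolding frob_def
proof (intro absolutely_integrable_sum)
  show "(\<lambda>x. \<rho> x $ i $ j * B x $ i $ j) absolutely_integrable_on S" for i j
    using absolutely_integrable_continuous_mult[OF S B \<rho>, of i j i j] by (simp add: mult.commute)
qed simp_all

lemma absolutely_integrable_lincomb_entries:
  fixes \<rho> :: "real^'n \<Rightarrow> real^'n^'n"
  assumes "\<And>i j. (\<lambda>x. \<rho> x $ i $ j) absolutely_integrable_on S"
  shows "(\<lambda>x. \<Sum>k\<in>UNIV. \<Sum>l\<in>UNIV. a k l * \<rho> x $ k $ l) absolutely_integrable_on S"
  by (intro absolutely_integrable_sum set_integrable_mult_right assms) simp_all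

lemma admissible_diff_poly_mat:
  assumes K: "compact K" "convex K" and \<sigma>: "admissible K \<sigma>" and \<tau>: "poly_mat k \<tau>"
  shows "admissible K (\<lambda>x. \<sigma> x - \<tau> x)"
  unfolding admissible_def
proof (intro conjI allI impI)
  fix i j
  have "(\<lambda>x. \<tau> x $ i $ j) absolutely_integrable_on K"
    by (rule absolutely_integrable_continuous_compact[OF K(1) continuous_on_poly_mat[OF \<tau>]])
  then show "(\<lambda>x. (\<sigma> x - \<tau> x) $ i $ j) absolutely_integrable_on K"
    using \<sigma> by (auto simp: admissible_def)
next
  fix F i j assume F: "F facet_of K"
  have "compact F" using face_of_imp_compact[OF K(2) K(1) facet_of_imp_face_of[OF F]] .
  moreover have "continuous_on (facet_prism F) (\<lambda>x. \<tau> (facet_proj F x) $ i $ j)"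
    using continuous_on_compose2[OF continuous_on_poly_mat[OF \<tau>, of UNIV i j]
        continuous_on_facet_proj[of "facet_prism F" F]] by auto
  ultimately have "(\<lambda>x. \<tau> (facet_proj F x) $ i $ j) absolutely_integrable_on facet_prism F"
    by (intro absolutely_integrable_continuous_compact compact_facet_prism)
  then show "(\<lambda>x. (\<sigma> (facet_proj F x) - \<tau> (facet_proj F x)) $ i $ j) absolutely_integrable_on facet_prism F"
    using \<sigma> F by (auto simp: admissible_def)
qed

lemma absolutely_integrable_facet_dof:
  fixes K :: "(real^'n) set"
  assumes K: "compact K" "convex K" and F: "F facet_of K" and \<rho>: "admissible K \<rho>"
    and r: "poly_vec k r"
  shows "(\<lambda>z. nt F (\<rho> (facet_proj F z)) \<bullet> r (facet_proj F z)) absolutely_integrable_on facet_prism F"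
proof -
  have "compact F" using face_of_imp_compact[OF K(2) K(1) facet_of_imp_face_of[OF F]] .
  have "(\<lambda>z. frob (\<rho> (facet_proj F z)) (nt_adjoint (facet_normal F) (r (facet_proj F z))))
      absolutely_integrable_on facet_prism F"
  proof (rule absolutely_integrable_frob_continuous[OF compact_facet_prism[OF \<open>compact F\<close>]])
    show "(\<lambda>x. \<rho> (facet_proj F x) $ i $ j) absolutely_integrable_on facet_prism F" for i j
      using \<rho> F by (auto simp: admissible_def)
    have "continuous_on (facet_prism F) (\<lambda>z. r (facet_proj F z))"
      using continuous_on_compose2[OF continuous_on_poly_vec[OF r, of UNIV] continuous_on_facet_proj]
      by auto
    then show "continuous_on (facet_prism F)
        (\<lambda>x. nt_adjoint (facet_normal F) (r (facet_proj F x)) $ i $ j)" for i j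
      unfolding nt_adjoint_def by (intro continuous_intros) auto
  qed
  then show ?thesis by (simp add: nt_eq_normal_tangential normal_tangential_inner)
qed

text \<open>\<open>pullback G b (det G)\<close> is the map \<open>M\<^sup>-\<^sup>1\<close> of the statement for \<open>\<phi>\<^sub>T x = G x + b\<close>.\<close>

definition pullback ::
    "real^'n^'n \<Rightarrow> real^'n \<Rightarrow> real \<Rightarrow> (real^'n \<Rightarrow> real^'n^'n) \<Rightarrow> real^'n \<Rightarrow> real^'n^'n" where
  "pullback G b c \<rho> = (\<lambda>x. c *\<^sub>R (transpose G ** \<rho> (G *v x + b) ** matrix_inv (transpose G)))"

lemma pullback_nth: "pullback G b c \<rho> x $ i $ j = (\<Sum>k\<in>UNIV. \<Sum>l\<in>UNIV.
    (c * transpose G $ i $ k * matrix_inv (transpose G) $ l $ j) * \<rho> (G *v x + b) $ k $ l)"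
  by (simp add: pullback_def matrix_mul3_nth sum_distrib_left mult_ac)

lemma matrix_mul_diff_left: "(A::real^'n^'n) ** (B - C) = A ** B - A ** C"
  by (simp add: vec_eq_iff matrix_matrix_mult_def sum_subtractf right_diff_distrib)

lemma matrix_mul_diff_right: "((B::real^'n^'n) - C) ** A = B ** A - C ** A"
  by (simp add: vec_eq_iff matrix_matrix_mult_def sum_subtractf left_diff_distrib)

lemma pullback_diff: "pullback G b c (\<lambda>x. \<sigma> x - \<tau> x) = (\<lambda>x. pullback G b c \<sigma> x - pullback G b c \<tau> x)"
  by (simp add: pullback_def fun_eq_iff matrix_mul_diff_left matrix_mul_diff_right scaleR_diff_right)

lemma pullback_inverse:
  assumes G: "invertible (G::real^'n^'n)" and c: "c \<noteq> 0"
  shows "pullback (matrix_inv G) (- (matrix_inv G *v b)) (1 / c) (pullback G b c \<sigma>) = \<sigma>"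
    and "pullback G b c (pullback (matrix_inv G) (- (matrix_inv G *v b)) (1 / c) \<tau>) = \<tau>"
proof -
  define H where "H = matrix_inv (transpose G)"
  have GT: "invertible (transpose G)" by (rule transpose_invertible[OF G])
  have e1: "G *v (matrix_inv G *v x + - (matrix_inv G *v b)) + b = x" for x
    by (simp add: matrix_vector_right_distrib matrix_vector_mult_diff_distrib matrix_inv_cancel_right[OF G])
  have e2: "matrix_inv G *v (G *v x + b) + - (matrix_inv G *v b) = x" for x
    by (simp add: matrix_vector_right_distrib matrix_inv_cancel_left[OF G])
  have e3: "transpose (matrix_inv G) = H" by (simp add: H_def matrix_inv_transpose[OF G])
  have e4: "matrix_inv H = transpose G" by (simp add: H_def matrix_inv_matrix_inv[OF GT])
  have r0: "H ** transpose G = mat 1" "transpose G ** H = mat 1"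
    by (simp_all add: H_def matrix_inv_left[OF GT] matrix_inv_right[OF GT])
  have r1: "Y ** H ** transpose G = Y" and r2: "Y ** transpose G ** H = Y" for Y :: "real^'n^'n"
    by (simp_all add: matrix_mul_assoc[symmetric] r0)
  have s: "X ** (k *\<^sub>R Y) = k *\<^sub>R (X ** Y)" "(k *\<^sub>R X) ** Y = k *\<^sub>R (X ** Y)" for X Y :: "real^'n^'n" and k
    by (simp_all add: matrix_scalar_ac scalar_matrix_assoc)
  show "pullback (matrix_inv G) (- (matrix_inv G *v b)) (1 / c) (pullback G b c \<sigma>) = \<sigma>"
    "pullback G b c (pullback (matrix_inv G) (- (matrix_inv G *v b)) (1 / c) \<tau>) = \<tau>"
    unfolding pullback_def e1 e2 e3 e4 H_def[symmetric]
    using c by (simp_all add: s matrix_mul_assoc r0 r1 r2 fun_eq_iff)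
qed

lemma Sigma_pullback:
  fixes G :: "real^'n^'n" and K0 :: "(real^'n) set"
  assumes G: "invertible G" and K0: "aff_dim K0 = int CARD('n)"
    and \<tau>: "\<tau> \<in> Sigma k ((\<lambda>x. G *v x + b) ` K0)"
  shows "pullback G b c \<tau> \<in> Sigma k K0"
proof -
  have "poly_mat k \<tau>" using \<tau> by (simp add: Sigma_def)
  then have "poly_mat k (pullback G b c \<tau>)"
    unfolding pullback_def by (rule poly_mat_conj_compose_affine)
  moreover have "trace (pullback G b c \<tau> x) = 0" for x
    using \<tau> by (simp add: pullback_def trace_scaleR_conj[OF transpose_invertible[OF G]] Sigma_def)
  moreover have "\<exists>q. poly_vec (k - 1) q \<and> (\<forall>x\<in>F0. nt F0 (pullback G b c \<tau> x) = q x)"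
    if F0: "F0 facet_of K0" for F0
  proof -
    define F where "F = (\<lambda>x. G *v x + b) ` F0"
    obtain lam where lam: "lam \<noteq> 0" "transpose G *v facet_normal F = lam *\<^sub>R facet_normal F0"
      using transpose_facet_normal_affine_image[OF G F0 K0] unfolding F_def by blast
    obtain L where L: "\<And>A. normal_tangential (facet_normal F0)
        (c *\<^sub>R (transpose G ** A ** matrix_inv (transpose G))) = L *v normal_tangential (facet_normal F) A"
      using normal_tangential_conj_linear[OF transpose_invertible[OF G]
          facet_normal_inner_self[OF F0 K0] lam(2) lam(1)] by blast
    obtain q where q: "poly_vec (k - 1) q" "\<And>y. y \<in> F \<Longrightarrow> nt F (\<tau> y) = q y"
      using \<tau> facet_of_affine_image[OF G F0, where b=b] by (auto simp: Sigma_def F_def)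
    have "nt F0 (pullback G b c \<tau> x) = L *v q (G *v x + b)" if "x \<in> F0" for x
      using q(2)[of "G *v x + b"] that by (simp add: F_def pullback_def nt_eq_normal_tangential L)
    then show ?thesis using poly_vec_matrix_compose_affine[OF q(1)] by blast
  qed
  ultimately show ?thesis by (simp add: Sigma_def)
qed

lemma admissible_pullback:
  fixes G :: "real^'n^'n" and K0 :: "(real^'n) set"
  assumes cov: "affine_change_of_variables TYPE('n)"
    and G: "invertible G" and K0: "aff_dim K0 = int CARD('n)"
    and \<rho>: "admissible ((\<lambda>x. G *v x + b) ` K0) \<rho>"
  shows "admissible K0 (pullback G b c \<rho>)"
  unfolding admissible_def pullback_nth
proof (intro conjI allI impI absolutely_integrable_lincomb_entries)
  obtain C where C: "\<And>(f::real^'n \<Rightarrow> real) S. f absolutely_integrable_on (\<lambda>x. G *v x + b) ` S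
      \<longleftrightarrow> (\<lambda>x. f (G *v x + b)) absolutely_integrable_on S"
    using affine_change_of_variablesD[OF cov matrix_vector_mul_linear inj_matrix_vector_mult[OF G]] by blast
  show "(\<lambda>x. \<rho> (G *v x + b) $ k $ l) absolutely_integrable_on K0" for k l
    using C[of K0 "\<lambda>y. \<rho> y $ k $ l"] \<rho> by (simp add: admissible_def)
next
  fix F0 k l assume F0: "F0 facet_of K0"
  define F where "F = (\<lambda>x. G *v x + b) ` F0"
  obtain l' c' where l': "linear l'" "inj l'" "(\<lambda>x. l' x + c') ` facet_prism F0 = facet_prism F"
    "\<And>x. x \<in> facet_prism F0 \<Longrightarrow> facet_proj F (l' x + c') = G *v facet_proj F0 x + b"
    using facet_prism_affine_image[OF G F0 K0, of b] unfolding F_def by blast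
  obtain C where C: "\<And>(f::real^'n \<Rightarrow> real) S. f absolutely_integrable_on (\<lambda>x. l' x + c') ` S
      \<longleftrightarrow> (\<lambda>x. f (l' x + c')) absolutely_integrable_on S"
    using affine_change_of_variablesD[OF cov l'(1,2)] by blast
  have "(\<lambda>z. \<rho> (facet_proj F z) $ k $ l) absolutely_integrable_on facet_prism F"
    using \<rho> facet_of_affine_image[OF G F0, where b=b] by (auto simp: admissible_def F_def)
  then have "(\<lambda>x. \<rho> (facet_proj F (l' x + c')) $ k $ l) absolutely_integrable_on facet_prism F0"
    using C[of "facet_prism F0" "\<lambda>z. \<rho> (facet_proj F z) $ k $ l"] l'(3) by simp
  then show "(\<lambda>x. \<rho> (G *v facet_proj F0 x + b) $ k $ l) absolutely_integrable_on facet_prism F0"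
    by (rule absolutely_integrable_spike[where S="{}"]) (simp_all add: l'(4))
qed

lemma facet_dof_pullback:
  fixes G :: "real^'n^'n" and K0 :: "(real^'n) set" and b :: "real^'n"
  defines "\<psi> \<equiv> \<lambda>x. G *v x + b"
  assumes cov: "affine_change_of_variables TYPE('n)" and G: "invertible G"
    and K0: "compact K0" "convex K0" "aff_dim K0 = int CARD('n)"
    and F0: "F0 facet_of K0" and r0: "poly_vec (k - 1) r0" and \<rho>: "admissible (\<psi> ` K0) \<rho>"
  obtains C r where "C > 0" "poly_vec (k - 1) r"
    "facet_integral (\<psi> ` F0) (\<lambda>z. nt (\<psi> ` F0) (\<rho> z) \<bullet> r z)
       = C * facet_integral F0 (\<lambda>x. nt F0 (pullback G b c \<rho> x) \<bullet> r0 x)"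
proof -
  define F where "F = \<psi> ` F0"
  have F: "F facet_of \<psi> ` K0" unfolding F_def \<psi>_def by (rule facet_of_affine_image[OF G F0])
  obtain lam where lam: "lam \<noteq> 0" "transpose G *v facet_normal F = lam *\<^sub>R facet_normal F0"
    using transpose_facet_normal_affine_image[OF G F0 K0(3)] unfolding F_def \<psi>_def by blast
  obtain L where L: "\<And>A. normal_tangential (facet_normal F0)
      (c *\<^sub>R (transpose G ** A ** matrix_inv (transpose G))) = L *v normal_tangential (facet_normal F) A"
    using normal_tangential_conj_linear[OF transpose_invertible[OF G]
        facet_normal_inner_self[OF F0 K0(3)] lam(2) lam(1)] by blast
  obtain l' c' where l': "linear l'" "inj l'" "(\<lambda>x. l' x + c') ` facet_prism F0 = facet_prism F"
    "\<And>x. x \<in> facet_prism F0 \<Longrightarrow> facet_proj F (l' x + c') = \<psi> (facet_proj F0 x)"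
    using facet_prism_affine_image[OF G F0 K0(3), of b] unfolding F_def \<psi>_def by blast
  obtain C where C: "C > 0"
    "\<And>(f::real^'n \<Rightarrow> real) S. f absolutely_integrable_on (\<lambda>x. l' x + c') ` S
       \<longleftrightarrow> (\<lambda>x. f (l' x + c')) absolutely_integrable_on S"
    "\<And>(f::real^'n \<Rightarrow> real) S. f absolutely_integrable_on (\<lambda>x. l' x + c') ` S \<Longrightarrow>
       integral ((\<lambda>x. l' x + c') ` S) f = C * integral S (\<lambda>x. f (l' x + c'))"
    using affine_change_of_variablesD[OF cov l'(1,2)] by blast
  define r where "r z = transpose L *v r0 (matrix_inv G *v z + - (matrix_inv G *v b))" for z
  have r: "poly_vec (k - 1) r" unfolding r_def by (rule poly_vec_matrix_compose_affine[OF r0])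
  define g where "g = (\<lambda>z. nt F (\<rho> z) \<bullet> r z)"
  have g: "(\<lambda>z. g (facet_proj F z)) absolutely_integrable_on (\<lambda>x. l' x + c') ` facet_prism F0"
    unfolding g_def l'(3) \<psi>_def
    by (rule absolutely_integrable_facet_dof[OF compact_affine_image[OF K0(1)]
          convex_affine_image[OF K0(2)] F[unfolded \<psi>_def] \<rho>[unfolded \<psi>_def] r])
  have "g (\<psi> y) = nt F0 (pullback G b c \<rho> y) \<bullet> r0 y" for y
  proof -
    have "r (\<psi> y) = transpose L *v r0 y"
      by (simp add: r_def \<psi>_def matrix_vector_right_distrib matrix_inv_cancel_left[OF G])
    then have "g (\<psi> y) = (L *v nt F (\<rho> (\<psi> y))) \<bullet> r0 y"
      by (simp add: g_def dot_lmul_matrix[symmetric] inner_commute)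
    also have "\<dots> = nt F0 (pullback G b c \<rho> y) \<bullet> r0 y"
      by (simp add: pullback_def nt_eq_normal_tangential L \<psi>_def)
    finally show ?thesis .
  qed
  then have "integral (facet_prism F0) (\<lambda>x. g (facet_proj F (l' x + c')))
      = facet_integral F0 (\<lambda>x. nt F0 (pullback G b c \<rho> x) \<bullet> r0 x)"
    unfolding facet_integral_def by (intro integral_cong) (simp add: l'(4))
  moreover have "facet_integral F g = C * integral (facet_prism F0) (\<lambda>x. g (facet_proj F (l' x + c')))"
    using C(3)[OF g] by (simp add: facet_integral_def l'(3))
  ultimately show ?thesis
    using that[OF C(1) r] unfolding F_def g_def by simp
qed

lemma bubble_dof_pullback:
  fixes G FK0 :: "real^'n^'n" and K0 :: "(real^'n) set" and b bK0 :: "real^'n"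
  assumes cov: "affine_change_of_variables TYPE('n)" and G: "invertible G" and FK0: "invertible FK0"
    and K0: "compact K0" and \<rho>: "admissible ((\<lambda>x. G *v x + b) ` K0) \<rho>" and \<eta>: "poly_mat k \<eta>"
  obtains C where "C > 0"
    "c * integral ((\<lambda>x. G *v x + b) ` K0)
        (\<lambda>x. frob (\<rho> x) ((G ** FK0) ** \<eta> (matrix_inv (G ** FK0) *v (x - (G *v bK0 + b))) ** matrix_inv (G ** FK0)))
     = C * integral K0
        (\<lambda>x. frob (pullback G b c \<rho> x) (FK0 ** \<eta> (matrix_inv FK0 *v (x - bK0)) ** matrix_inv FK0))"
proof -
  define FK where "FK = G ** FK0"
  define h where "h x = frob (\<rho> x) (FK ** \<eta> (matrix_inv FK *v (x - (G *v bK0 + b))) ** matrix_inv FK)" for x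
  obtain C where C: "C > 0"
    "\<And>(f::real^'n \<Rightarrow> real) S. f absolutely_integrable_on (\<lambda>x. G *v x + b) ` S
       \<longleftrightarrow> (\<lambda>x. f (G *v x + b)) absolutely_integrable_on S"
    "\<And>(f::real^'n \<Rightarrow> real) S. f absolutely_integrable_on (\<lambda>x. G *v x + b) ` S \<Longrightarrow>
       integral ((\<lambda>x. G *v x + b) ` S) f = C * integral S (\<lambda>x. f (G *v x + b))"
    using affine_change_of_variablesD[OF cov matrix_vector_mul_linear inj_matrix_vector_mult[OF G], where b=b]
    by blast
  have "poly_mat k (\<lambda>x.
      1 *\<^sub>R (FK ** \<eta> (matrix_inv FK *v x + - (matrix_inv FK *v (G *v bK0 + b))) ** matrix_inv FK))"
    by (rule poly_mat_conj_compose_affine[OF \<eta>])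
  then have "h absolutely_integrable_on (\<lambda>x. G *v x + b) ` K0"
    unfolding h_def using \<rho> compact_affine_image[OF K0]
    by (intro absolutely_integrable_frob_continuous continuous_on_poly_mat)
      (auto simp: admissible_def matrix_vector_mult_diff_distrib)
  then have h: "integral ((\<lambda>x. G *v x + b) ` K0) h = C * integral K0 (\<lambda>x. h (G *v x + b))"
    by (rule C(3))
  have inv: "matrix_inv FK = matrix_inv FK0 ** matrix_inv G"
    unfolding FK_def by (rule matrix_inv_mult[OF G FK0])
  have "frob (pullback G b c \<rho> y) (FK0 ** \<eta> (matrix_inv FK0 *v (y - bK0)) ** matrix_inv FK0)
      = c * h (G *v y + b)" for y
  proof -
    have "matrix_inv FK *v (G *v y + b - (G *v bK0 + b)) = matrix_inv FK0 *v (y - bK0)"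
      by (simp add: inv matrix_vector_mul_assoc[symmetric] matrix_vector_mult_diff_distrib[symmetric]
          matrix_inv_cancel_left[OF G])
    moreover have "transpose (matrix_inv (transpose G)) = matrix_inv G"
      by (simp add: matrix_inv_transpose[OF G] transpose_transpose)
    ultimately show ?thesis
      unfolding pullback_def frob_scaleR_conj h_def transpose_transpose
      by (simp add: FK_def[symmetric] inv matrix_mul_assoc)
  qed
  then have "integral K0 (\<lambda>x. frob (pullback G b c \<rho> x) (FK0 ** \<eta> (matrix_inv FK0 *v (x - bK0)) ** matrix_inv FK0))
      = c * integral K0 (\<lambda>x. h (G *v x + b))"
    by simp
  with h have "c * integral ((\<lambda>x. G *v x + b) ` K0) h
      = C * integral K0 (\<lambda>x. frob (pullback G b c \<rho> x) (FK0 ** \<eta> (matrix_inv FK0 *v (x - bK0)) ** matrix_inv FK0))"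
    by simp
  then show ?thesis
    using that[OF C(1)] unfolding h_def FK_def by simp
qed

lemma dofs_vanish_pullback:
  fixes G FK0 :: "real^'n^'n" and K0 :: "(real^'n) set" and b bK0 :: "real^'n"
  assumes cov: "affine_change_of_variables TYPE('n)" and G: "invertible G" and FK0: "invertible FK0"
    and K0: "compact K0" "convex K0" "aff_dim K0 = int CARD('n)"
    and \<rho>: "admissible ((\<lambda>x. G *v x + b) ` K0) \<rho>"
    and dofs: "dofs_vanish k ((\<lambda>x. G *v x + b) ` K0) (G ** FK0) (G *v bK0 + b) \<rho>"
  shows "dofs_vanish k K0 FK0 bK0 (pullback G b c \<rho>)"
  unfolding dofs_vanish_def
proof (intro conjI allI impI ballI)
  fix F0 and r0 :: "real^'n \<Rightarrow> real^'n"
  assume F0: "F0 facet_of K0" and r0: "poly_vec (k - 1) r0"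
  obtain C r where "C > 0" "poly_vec (k - 1) r"
    "facet_integral ((\<lambda>x. G *v x + b) ` F0) (\<lambda>z. nt ((\<lambda>x. G *v x + b) ` F0) (\<rho> z) \<bullet> r z)
       = C * facet_integral F0 (\<lambda>x. nt F0 (pullback G b c \<rho> x) \<bullet> r0 x)"
    using facet_dof_pullback[OF cov G K0 F0 r0 \<rho>] by blast
  with dofs facet_of_affine_image[OF G F0, where b=b]
  show "facet_integral F0 (\<lambda>x. nt F0 (pullback G b c \<rho> x) \<bullet> r0 x) = 0"
    by (simp add: dofs_vanish_def)
next
  fix \<eta> assume "\<eta> \<in> Bubble k (ref_simplex :: (real^'n) set)"
  then have \<eta>: "poly_mat k \<eta>" by (simp add: Bubble_def Sigma_def)
  obtain C where "C > 0"
    "c * integral ((\<lambda>x. G *v x + b) ` K0)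
        (\<lambda>x. frob (\<rho> x) ((G ** FK0) ** \<eta> (matrix_inv (G ** FK0) *v (x - (G *v bK0 + b))) ** matrix_inv (G ** FK0)))
     = C * integral K0
        (\<lambda>x. frob (pullback G b c \<rho> x) (FK0 ** \<eta> (matrix_inv FK0 *v (x - bK0)) ** matrix_inv FK0))"
    using bubble_dof_pullback[OF cov G FK0 K0(1) \<rho> \<eta>] by blast
  with dofs \<open>\<eta> \<in> Bubble k ref_simplex\<close>
  show "integral K0 (\<lambda>x. frob (pullback G b c \<rho> x) (FK0 ** \<eta> (matrix_inv FK0 *v (x - bK0)) ** matrix_inv FK0)) = 0"
    by (simp add: dofs_vanish_def)
qed

lemma affine_image_inverse:
  assumes "invertible (G::real^'n^'n)"
  shows "(\<lambda>x. matrix_inv G *v x + - (matrix_inv G *v b)) ` (\<lambda>x. G *v x + b) ` K = K"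
  by (simp add: image_image matrix_vector_right_distrib matrix_inv_cancel_left[OF assms])

lemma Sigma_pullback_iff:
  fixes G :: "real^'n^'n" and K0 :: "(real^'n) set"
  assumes G: "invertible G" and c: "c \<noteq> 0" and K0: "aff_dim K0 = int CARD('n)"
  shows "pullback G b c \<tau> \<in> Sigma k K0 \<longleftrightarrow> \<tau> \<in> Sigma k ((\<lambda>x. G *v x + b) ` K0)"
proof
  assume "pullback G b c \<tau> \<in> Sigma k K0"
  then have "pullback G b c \<tau>
      \<in> Sigma k ((\<lambda>x. matrix_inv G *v x + - (matrix_inv G *v b)) ` (\<lambda>x. G *v x + b) ` K0)"
    by (simp only: affine_image_inverse[OF G])
  from Sigma_pullback[OF invertible_matrix_inv[OF G] _ this] K0
  have "pullback (matrix_inv G) (- (matrix_inv G *v b)) (1 / c) (pullback G b c \<tau>)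
      \<in> Sigma k ((\<lambda>x. G *v x + b) ` K0)"
    by (simp add: aff_dim_affine_image[OF G])
  then show "\<tau> \<in> Sigma k ((\<lambda>x. G *v x + b) ` K0)" by (simp only: pullback_inverse[OF G c])
qed (rule Sigma_pullback[OF G K0])

lemma dofs_vanish_pullback_iff:
  fixes G FK0 :: "real^'n^'n" and K0 :: "(real^'n) set" and b bK0 :: "real^'n"
  assumes cov: "affine_change_of_variables TYPE('n)" and G: "invertible G" and c: "c \<noteq> 0"
    and FK0: "invertible FK0" and K0: "compact K0" "convex K0" "aff_dim K0 = int CARD('n)"
    and \<rho>: "admissible ((\<lambda>x. G *v x + b) ` K0) \<rho>"
  shows "dofs_vanish k K0 FK0 bK0 (pullback G b c \<rho>)
    \<longleftrightarrow> dofs_vanish k ((\<lambda>x. G *v x + b) ` K0) (G ** FK0) (G *v bK0 + b) \<rho>"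
proof
  define G' where "G' = matrix_inv G"
  define b' where "b' = - (matrix_inv G *v b)"
  let ?K = "(\<lambda>x. G *v x + b) ` K0"
  have K: "(\<lambda>x. G' *v x + b') ` ?K = K0"
    unfolding G'_def b'_def by (rule affine_image_inverse[OF G])
  have FK: "G' ** (G ** FK0) = FK0"
    by (simp add: G'_def matrix_mul_assoc matrix_inv_left[OF G])
  have bK: "G' *v (G *v bK0 + b) + b' = bK0"
    by (simp add: G'_def b'_def matrix_vector_right_distrib matrix_inv_cancel_left[OF G])
  assume "dofs_vanish k K0 FK0 bK0 (pullback G b c \<rho>)"
  then have "dofs_vanish k ((\<lambda>x. G' *v x + b') ` ?K) (G' ** (G ** FK0)) (G' *v (G *v bK0 + b) + b')
      (pullback G b c \<rho>)"
    by (simp only: K FK bK)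
  moreover have "admissible ((\<lambda>x. G' *v x + b') ` ?K) (pullback G b c \<rho>)"
    unfolding K by (rule admissible_pullback[OF cov G K0(3) \<rho>])
  ultimately have "dofs_vanish k ?K (G ** FK0) (G *v bK0 + b) (pullback G' b' (1 / c) (pullback G b c \<rho>))"
    using dofs_vanish_pullback[OF cov invertible_matrix_inv[OF G, folded G'_def] invertible_mult[OF G FK0]
        compact_affine_image[OF K0(1)] convex_affine_image[OF K0(2)]]
    by (simp add: aff_dim_affine_image[OF G] K0(3))
  then show "dofs_vanish k ?K (G ** FK0) (G *v bK0 + b) \<rho>"
    by (simp only: G'_def b'_def pullback_inverse[OF G c])
qed (rule dofs_vanish_pullback[OF cov G FK0 K0 \<rho>])

lemma the_bij_transfer:
  assumes PQ: "\<And>x. P x \<longleftrightarrow> Q (f x)" and fg: "\<And>y. f (g y) = y" and gf: "\<And>x. g (f x) = x"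
    and Q: "\<exists>!y. Q y"
  shows "f (THE x. P x) = (THE y. Q y)"
proof -
  obtain y where y: "Q y" and uniq: "\<And>y'. Q y' \<Longrightarrow> y' = y" using Q by blast
  have "(THE x. P x) = g y"
  proof (rule the_equality)
    show "P (g y)" using PQ fg y by simp
    show "x = g y" if "P x" for x
    proof -
      have "f x = y" using PQ that uniq by blast
      then show ?thesis using gf[of x] by simp
    qed
  qed
  then show ?thesis using fg the1_equality[OF Q y] by simp
qed

lemma interp_pullback:
  fixes G FK0 :: "real^'n^'n" and K0 :: "(real^'n) set" and b bK0 :: "real^'n"
  assumes cov: "affine_change_of_variables TYPE('n)" and G: "invertible G" and c: "c \<noteq> 0"
    and FK0: "invertible FK0" and K0: "compact K0" "convex K0" "aff_dim K0 = int CARD('n)"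
    and unisolvent: "\<And>\<rho>. admissible K0 \<rho> \<Longrightarrow>
          \<exists>!\<tau>. \<tau> \<in> Sigma k K0 \<and> dofs_vanish k K0 FK0 bK0 (\<lambda>x. \<rho> x - \<tau> x)"
    and \<sigma>: "admissible ((\<lambda>x. G *v x + b) ` K0) \<sigma>"
  shows "pullback G b c (interp k ((\<lambda>x. G *v x + b) ` K0) (G ** FK0) (G *v bK0 + b) \<sigma>)
       = interp k K0 FK0 bK0 (pullback G b c \<sigma>)"
  unfolding interp_def
proof (rule the_bij_transfer[where g="pullback (matrix_inv G) (- (matrix_inv G *v b)) (1 / c)"])
  let ?K = "(\<lambda>x. G *v x + b) ` K0"
  show "\<tau> \<in> Sigma k ?K \<and> dofs_vanish k ?K (G ** FK0) (G *v bK0 + b) (\<lambda>x. \<sigma> x - \<tau> x)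
    \<longleftrightarrow> pullback G b c \<tau> \<in> Sigma k K0 \<and>
        dofs_vanish k K0 FK0 bK0 (\<lambda>x. pullback G b c \<sigma> x - pullback G b c \<tau> x)" for \<tau>
  proof (cases "\<tau> \<in> Sigma k ?K")
    case True
    then have "admissible ?K (\<lambda>x. \<sigma> x - \<tau> x)"
      by (intro admissible_diff_poly_mat[OF compact_affine_image[OF K0(1)] convex_affine_image[OF K0(2)] \<sigma>,
          where k=k]) (simp add: Sigma_def)
    with True show ?thesis
      by (simp add: dofs_vanish_pullback_iff[OF cov G c FK0 K0] pullback_diff[symmetric]
          Sigma_pullback_iff[OF G c K0(3)])
  qed (simp add: Sigma_pullback_iff[OF G c K0(3)])
  show "pullback G b c (pullback (matrix_inv G) (- (matrix_inv G *v b)) (1 / c) \<tau>) = \<tau>" for \<tau>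
    by (rule pullback_inverse(2)[OF G c])
  show "pullback (matrix_inv G) (- (matrix_inv G *v b)) (1 / c) (pullback G b c \<tau>) = \<tau>" for \<tau>
    by (rule pullback_inverse(1)[OF G c])
  show "\<exists>!\<tau>. \<tau> \<in> Sigma k K0 \<and> dofs_vanish k K0 FK0 bK0 (\<lambda>x. pullback G b c \<sigma> x - \<tau> x)"
    by (rule unisolvent[OF admissible_pullback[OF cov G K0(3) \<sigma>]])
qed

theorem lemma5p7:
  fixes FT :: "real^'n^'n" and bT :: "real^'n" and \<sigma> :: "real^'n \<Rightarrow> real^'n^'n" and k :: nat
  assumes dim: "CARD('n) = 2 \<or> CARD('n) = 3"
    and nondeg: "invertible FT"
    and k: "k \<ge> 1"
    and unisolvent_ref: "\<And>\<rho>. admissible (ref_simplex :: (real^'n) set) \<rho> \<Longrightarrow>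
          \<exists>!\<tau>. \<tau> \<in> Sigma k ref_simplex \<and> dofs_vanish k ref_simplex (mat 1) 0 (\<lambda>x. \<rho> x - \<tau> x)"
    and sigma: "admissible (aff_map FT bT ` ref_simplex) \<sigma>"
  shows "Minv FT bT (interp k (aff_map FT bT ` ref_simplex) FT bT \<sigma>)
       = interp k ref_simplex (mat 1) 0 (Minv FT bT \<sigma>)"
proof -
  have T: "aff_map FT bT ` ref_simplex = (\<lambda>x. FT *v x + bT) ` ref_simplex"
    by (simp add: aff_map_def[abs_def])
  have Minv: "Minv FT bT = pullback FT bT (det FT)"
    by (simp add: fun_eq_iff Minv_def pullback_def aff_map_def)
  have "det FT \<noteq> 0" using nondeg by (simp add: invertible_det_nz)
  moreover have "invertible (mat 1 :: real^'n^'n)" by (auto simp: invertible_def)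
  moreover have "admissible ((\<lambda>x. FT *v x + bT) ` ref_simplex) \<sigma>" using sigma by (simp only: T)
  ultimately have "pullback FT bT (det FT) (interp k ((\<lambda>x. FT *v x + bT) ` ref_simplex) (FT ** mat 1)
      (FT *v 0 + bT) \<sigma>) = interp k ref_simplex (mat 1) 0 (pullback FT bT (det FT) \<sigma>)"
    using interp_pullback[OF affine_change_of_variables_card_2_3[OF dim] nondeg _ _
        compact_ref_simplex convex_ref_simplex aff_dim_ref_simplex unisolvent_ref] by blast
  then show ?thesis by (simp add: T Minv)
qed

end
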